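(* Let $\Gamma$ be a metric graph or a tropical curve with a real structure and let $D_1,D_2$ be two linearly equivalent real divisors on $\Gamma$. If $\Gamma'$ is a connected component of $\Gamma(\mathbb R)$, then $\deg(D_1|_{\Gamma'})\equiv\deg(D_2|_{\Gamma'})\pmod 2$, where $\deg(D|_{\Gamma'})=\sum_{p\in\Gamma'}D(p)$.
   Context: A metric graph is a compact connected metric space locally isometric to star-shaped sets $\{te^{2k\pi i/n}:0\le t<r\}\subset\mathbb C$; vertices are points of local valence $\ne2$, edges are the components of the complement of the vertices. A tropical curve is the union of a metric graph and finitely many unbounded edges isometric to $[0,\infty]$, each attached at its point $0$. A real structure is an isometric involution $\iota$; $\overline p=\iota(p)$; $\Gamma(\mathbb R)$ is the set of fixed points of $\iota$. A divisor is a finite formal $\mathbb Z$-combination of points; $\overline D(p)=D(\overline p)$; $D$ is real if $\overline D=D$. A rational function is a continuous $f:\Gamma\to\mathbb R$, piecewise affine with integer slopes and finitely many pieces on each edge; $\Delta(f)(p)$ is the sum of the outgoing slopes of $f$ at $p$; $D_1\sim D_2$ iff $D_2-D_1=\Delta(f)$ for some rational function $f$. *)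

theory Defs
  imports "HOL-Analysis.Analysis"
begin

text \<open>Edges of infinite
  length are the unbounded edges (legs) of a tropical curve: such an edge is
  isometric to [0,\<infinity>], attached at its point 0 (= src e); its point \<infinity> is the
  vertex tgt e, which lies on no other edge.
  A point of the curve is either a vertex or an interior point of an edge e,
  given by its distance t from src e (0 < t < len e).\<close>

datatype ('v, 'e) gpt = Vert 'v | Inner 'e real

definition gpts :: "('e \<Rightarrow> ereal) \<Rightarrow> ('v, 'e) gpt set" where
  "gpts len = range Vert \<union> {Inner e t | e t. 0 < t \<and> ereal t < len e}"

definition edge_pt :: "('e \<Rightarrow> 'v) \<Rightarrow> ('e \<Rightarrow> 'v) \<Rightarrow> ('e \<Rightarrow> ereal) \<Rightarrow> 'e \<Rightarrow> ereal \<Rightarrow> ('v, 'e) gpt" where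
  "edge_pt src tgt len e t =
     (if t \<le> 0 then Vert (src e) else if len e \<le> t then Vert (tgt e)
      else Inner e (real_of_ereal t))"

text \<open>The topology of the curve: the quotient topology of the disjoint union of
  the closed edges [0, len e] (with [0,\<infinity>] topologised as a subspace of the
  extended reals).\<close>
definition gtop :: "('e \<Rightarrow> 'v) \<Rightarrow> ('e \<Rightarrow> 'v) \<Rightarrow> ('e \<Rightarrow> ereal) \<Rightarrow> ('v, 'e) gpt topology" where
  "gtop src tgt len = topology (\<lambda>U. U \<subseteq> gpts len \<and>
     (\<forall>e. openin (top_of_set {0..len e}) {t \<in> {0..len e}. edge_pt src tgt len e t \<in> U}))"

lemma istopology_gtop:
  fixes src tgt :: "'e \<Rightarrow> 'v" and len :: "'e \<Rightarrow> ereal"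
  shows "istopology (\<lambda>U. U \<subseteq> gpts len \<and>
     (\<forall>e. openin (top_of_set {0..len e}) {t \<in> {0..len e}. edge_pt src tgt len e t \<in> U}))"
proof -
  have I: "\<And>S T e. {t \<in> {0..len e}. edge_pt src tgt len e t \<in> S \<inter> T} =
          {t \<in> {0..len e}. edge_pt src tgt len e t \<in> S} \<inter> {t \<in> {0..len e}. edge_pt src tgt len e t \<in> T}"
    by blast
  have U: "\<And>K e. {t \<in> {0..len e}. edge_pt src tgt len e t \<in> \<Union>K} =
          \<Union>((\<lambda>S. {t \<in> {0..len e}. edge_pt src tgt len e t \<in> S}) ` K)" by blast
  show ?thesis unfolding istopology_def
    by (auto simp only: I U intro!: openin_Int openin_Union)
qed

text \<open>Well-formed model: positive lengths; legs end in a point at infinity lying on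
  no other edge; the whole space is connected (compactness is automatic).\<close>
definition metric_graph_model :: "('e::finite \<Rightarrow> 'v::finite) \<Rightarrow> ('e \<Rightarrow> 'v) \<Rightarrow> ('e \<Rightarrow> ereal) \<Rightarrow> bool" where
  "metric_graph_model src tgt len \<longleftrightarrow>
     (\<forall>e. 0 < len e) \<and>
     (\<forall>e. len e = \<infinity> \<longrightarrow> tgt e \<noteq> src e \<and>
          (\<forall>e'. e' \<noteq> e \<longrightarrow> src e' \<noteq> tgt e \<and> tgt e' \<noteq> tgt e)) \<and>
     connected_space (gtop src tgt len)"

text \<open>Real structure: an isometric involution, given as an involutive automorphism
  of the model (vertex involution tau, edge involution sigma, fl e = edge e is
  mapped onto sigma e with reversed orientation).\<close>
definition real_structure :: "('e \<Rightarrow> 'v) \<Rightarrow> ('e \<Rightarrow> 'v) \<Rightarrow> ('e \<Rightarrow> ereal) \<Rightarrow>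
    ('v \<Rightarrow> 'v) \<Rightarrow> ('e \<Rightarrow> 'e) \<Rightarrow> ('e \<Rightarrow> bool) \<Rightarrow> bool" where
  "real_structure src tgt len \<tau> \<sigma> fl \<longleftrightarrow>
     (\<forall>v. \<tau> (\<tau> v) = v) \<and> (\<forall>e. \<sigma> (\<sigma> e) = e) \<and>
     (\<forall>e. len (\<sigma> e) = len e \<and> fl (\<sigma> e) = fl e) \<and>
     (\<forall>e. fl e \<longrightarrow> len e \<noteq> \<infinity>) \<and>
     (\<forall>e. \<not> fl e \<longrightarrow> src (\<sigma> e) = \<tau> (src e) \<and> tgt (\<sigma> e) = \<tau> (tgt e)) \<and>
     (\<forall>e. fl e \<longrightarrow> src (\<sigma> e) = \<tau> (tgt e) \<and> tgt (\<sigma> e) = \<tau> (src e))"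

definition conj_pt :: "('e \<Rightarrow> ereal) \<Rightarrow> ('v \<Rightarrow> 'v) \<Rightarrow> ('e \<Rightarrow> 'e) \<Rightarrow> ('e \<Rightarrow> bool) \<Rightarrow>
    ('v, 'e) gpt \<Rightarrow> ('v, 'e) gpt" where
  "conj_pt len \<tau> \<sigma> fl p = (case p of Vert v \<Rightarrow> Vert (\<tau> v)
     | Inner e t \<Rightarrow> (if fl e then Inner (\<sigma> e) (real_of_ereal (len e) - t) else Inner (\<sigma> e) t))"

definition real_pts :: "('e \<Rightarrow> ereal) \<Rightarrow> ('v \<Rightarrow> 'v) \<Rightarrow> ('e \<Rightarrow> 'e) \<Rightarrow> ('e \<Rightarrow> bool) \<Rightarrow> ('v, 'e) gpt set" where
  "real_pts len \<tau> \<sigma> fl = {p \<in> gpts len. conj_pt len \<tau> \<sigma> fl p = p}"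

definition divisor :: "('e \<Rightarrow> ereal) \<Rightarrow> (('v, 'e) gpt \<Rightarrow> int) \<Rightarrow> bool" where
  "divisor len D \<longleftrightarrow> finite {p. D p \<noteq> 0} \<and> {p. D p \<noteq> 0} \<subseteq> gpts len"

definition real_divisor :: "('e \<Rightarrow> ereal) \<Rightarrow> ('v \<Rightarrow> 'v) \<Rightarrow> ('e \<Rightarrow> 'e) \<Rightarrow> ('e \<Rightarrow> bool) \<Rightarrow>
    (('v, 'e) gpt \<Rightarrow> int) \<Rightarrow> bool" where
  "real_divisor len \<tau> \<sigma> fl D \<longleftrightarrow> (\<forall>p \<in> gpts len. D (conj_pt len \<tau> \<sigma> fl p) = D p)"

definition efun :: "('e \<Rightarrow> 'v) \<Rightarrow> ('e \<Rightarrow> 'v) \<Rightarrow> ('e \<Rightarrow> ereal) \<Rightarrow> (('v, 'e) gpt \<Rightarrow> real) \<Rightarrow> 'e \<Rightarrow> real \<Rightarrow> real" where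
  "efun src tgt len f e t = f (edge_pt src tgt len e (ereal t))"

definition piecewise_int_affine :: "(real \<Rightarrow> real) \<Rightarrow> ereal \<Rightarrow> bool" where
  "piecewise_int_affine g L \<longleftrightarrow>
     (\<exists>(a :: nat \<Rightarrow> real) k. a 0 = 0 \<and> (\<forall>i<k. a i < a (Suc i)) \<and>
        (L \<noteq> \<infinity> \<longrightarrow> ereal (a k) = L) \<and>
        (\<forall>i<k. \<exists>m :: int. \<exists>c. \<forall>t \<in> {a i..a (Suc i)}. g t = of_int m * t + c) \<and>
        (L = \<infinity> \<longrightarrow> (\<exists>m :: int. \<exists>c. \<forall>t \<ge> a k. g t = of_int m * t + c)))"

definition rational_fn :: "('e \<Rightarrow> 'v) \<Rightarrow> ('e \<Rightarrow> 'v) \<Rightarrow> ('e \<Rightarrow> ereal) \<Rightarrow> (('v, 'e) gpt \<Rightarrow> real) \<Rightarrow> bool" where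
  "rational_fn src tgt len f \<longleftrightarrow>
     continuous_map (gtop src tgt len) euclideanreal f \<and>
     (\<forall>e. piecewise_int_affine (efun src tgt len f e) (len e))"

definition rslope :: "(real \<Rightarrow> real) \<Rightarrow> real \<Rightarrow> real" where
  "rslope g t = (THE m. (g has_real_derivative m) (at_right t))"

definition lslope :: "(real \<Rightarrow> real) \<Rightarrow> real \<Rightarrow> real" where
  "lslope g t = (THE m. (g has_real_derivative m) (at_left t))"

text \<open>Delta(f)(p): sum of outgoing slopes at p.  At an interior point of edge e the
  outgoing slopes are the right derivative and minus the left derivative; at a
  vertex, each edge end contributes its outgoing slope (a loop contributes twice).
  At the point at infinity of a leg the (eventually constant) f has slope 0.\<close>
definition lap :: "('e::finite \<Rightarrow> 'v) \<Rightarrow> ('e \<Rightarrow> 'v) \<Rightarrow> ('e \<Rightarrow> ereal) \<Rightarrow> (('v, 'e) gpt \<Rightarrow> real) \<Rightarrow>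
    ('v, 'e) gpt \<Rightarrow> real" where
  "lap src tgt len f p = (case p of
      Inner e t \<Rightarrow> rslope (efun src tgt len f e) t - lslope (efun src tgt len f e) t
    | Vert v \<Rightarrow> (\<Sum>e | src e = v. rslope (efun src tgt len f e) 0)
              + (\<Sum>e | tgt e = v \<and> len e \<noteq> \<infinity>.
                    - lslope (efun src tgt len f e) (real_of_ereal (len e))))"

definition lin_equiv :: "('e::finite \<Rightarrow> 'v) \<Rightarrow> ('e \<Rightarrow> 'v) \<Rightarrow> ('e \<Rightarrow> ereal) \<Rightarrow>
    (('v, 'e) gpt \<Rightarrow> int) \<Rightarrow> (('v, 'e) gpt \<Rightarrow> int) \<Rightarrow> bool" where
  "lin_equiv src tgt len D1 D2 \<longleftrightarrow>
     (\<exists>f. rational_fn src tgt len f \<and>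
          (\<forall>p \<in> gpts len. real_of_int (D2 p - D1 p) = lap src tgt len f p))"

definition deg_on :: "(('v, 'e) gpt \<Rightarrow> int) \<Rightarrow> ('v, 'e) gpt set \<Rightarrow> int" where
  "deg_on D S = (\<Sum>p \<in> {p \<in> S. D p \<noteq> 0}. D p)"

end

(*
  Write D2 - D1 = lap f.  Since D1 and D2 are real, lap (f o iota) = lap f, so
  f o iota - f is harmonic; by the maximum principle it is constant on the connected curve,
  and being anti-invariant under iota it vanishes.  For the iota-invariant f, summing
  lap f over the component gives an even number: at a real vertex the outgoing slopes along
  edges exchanged by sigma cancel in pairs and an edge flipped onto itself contributes its
  slope twice, at the midpoint of such an edge both outgoing slopes agree, and along each
  real edge in the component the slope jumps at interior points telescope to minus the
  outgoing slopes at its two ends, cancelling their contributions at the vertices.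
*)

theory Submission
  imports Defs
begin

section \<open>One-sided slopes of locally affine functions\<close>

lemma has_real_derivative_affine_germ_iff:
  assumes "at t within S \<noteq> bot"
    and germ: "\<forall>\<^sub>F s in at t within S. g s = m * s + c" and "g t = m * t + c"
  shows "(g has_real_derivative m') (at t within S) \<longleftrightarrow> m' = m"
proof -
  have "\<forall>\<^sub>F s in at t within S. s \<noteq> t"
    by (simp add: eventually_at_filter)
  with germ have "\<forall>\<^sub>F s in at t within S. (g s - g t) / (s - t) = m"
    by eventually_elim (use \<open>g t = m * t + c\<close> in \<open>simp add: field_simps\<close>)
  then have quotient: "((\<lambda>s. (g s - g t) / (s - t)) \<longlongrightarrow> m) (at t within S)"
    by (rule tendsto_eventually)
  show ?thesis
    unfolding has_field_derivative_iff
    using tendsto_unique[OF assms(1) _ quotient] quotient by blast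
qed

lemma rslope_eqI:
  assumes "\<delta> > 0" and "\<forall>s\<in>{t..t+\<delta>}. g s = m * s + c"
  shows "rslope g t = m"
proof -
  have "\<forall>\<^sub>F s in at_right t. g s = m * s + c"
    using eventually_at_right_real[of t "t + \<delta>"] assms by (auto elim: eventually_mono)
  then show ?thesis
    unfolding rslope_def
    by (subst has_real_derivative_affine_germ_iff[where c = c]) (use assms in auto)
qed

lemma lslope_eqI:
  assumes "\<delta> > 0" and "\<forall>s\<in>{t-\<delta>..t}. g s = m * s + c"
  shows "lslope g t = m"
proof -
  have "\<forall>\<^sub>F s in at_left t. g s = m * s + c"
    using eventually_at_left_real[of "t - \<delta>" t] assms by (auto elim: eventually_mono)
  then show ?thesis
    unfolding lslope_def
    by (subst has_real_derivative_affine_germ_iff[where c = c]) (use assms in auto)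
qed

definition locally_int_affine :: "(real \<Rightarrow> real) \<Rightarrow> bool" where
  "locally_int_affine g \<longleftrightarrow>
    (\<forall>t. \<exists>m::int. \<exists>c. \<exists>\<delta>>0. \<forall>s\<in>{t..t+\<delta>}. g s = of_int m * s + c) \<and>
    (\<forall>t. \<exists>m::int. \<exists>c. \<exists>\<delta>>0. \<forall>s\<in>{t-\<delta>..t}. g s = of_int m * s + c)"

lemma locally_int_affine_right_germ:
  assumes "locally_int_affine g"
  obtains c \<delta> where "\<delta> > 0" "\<forall>s\<in>{t..t+\<delta>}. g s = rslope g t * s + c"
proof -
  obtain m :: int and c \<delta> where "\<delta> > 0" "\<forall>s\<in>{t..t+\<delta>}. g s = of_int m * s + c"
    using assms unfolding locally_int_affine_def by blast
  with rslope_eqI[OF this] show thesis using that by auto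
qed

lemma locally_int_affine_left_germ:
  assumes "locally_int_affine g"
  obtains c \<delta> where "\<delta> > 0" "\<forall>s\<in>{t-\<delta>..t}. g s = lslope g t * s + c"
proof -
  obtain m :: int and c \<delta> where "\<delta> > 0" "\<forall>s\<in>{t-\<delta>..t}. g s = of_int m * s + c"
    using assms unfolding locally_int_affine_def by blast
  with lslope_eqI[OF this] show thesis using that by auto
qed

lemma rslope_in_Ints: "locally_int_affine g \<Longrightarrow> rslope g t \<in> \<int>"
  unfolding locally_int_affine_def by (metis Ints_of_int rslope_eqI)

lemma lslope_in_Ints: "locally_int_affine g \<Longrightarrow> lslope g t \<in> \<int>"
  unfolding locally_int_affine_def by (metis Ints_of_int lslope_eqI)

lemma locally_int_affine_diff:
  assumes "locally_int_affine g1" "locally_int_affine g2"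
  shows "locally_int_affine (\<lambda>s. g1 s - g2 s)"
  unfolding locally_int_affine_def
proof (intro conjI allI)
  fix t
  obtain m1 :: int and c1 d1 where "d1 > 0" "\<forall>s\<in>{t..t+d1}. g1 s = of_int m1 * s + c1"
    using assms(1) unfolding locally_int_affine_def by blast
  moreover obtain m2 :: int and c2 d2 where "d2 > 0" "\<forall>s\<in>{t..t+d2}. g2 s = of_int m2 * s + c2"
    using assms(2) unfolding locally_int_affine_def by blast
  ultimately show "\<exists>m::int. \<exists>c. \<exists>\<delta>>0. \<forall>s\<in>{t..t+\<delta>}. g1 s - g2 s = of_int m * s + c"
    by (intro exI[of _ "m1 - m2"] exI[of _ "c1 - c2"] exI[of _ "min d1 d2"])
      (auto simp: algebra_simps)
next
  fix t
  obtain m1 :: int and c1 d1 where "d1 > 0" "\<forall>s\<in>{t-d1..t}. g1 s = of_int m1 * s + c1"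
    using assms(1) unfolding locally_int_affine_def by blast
  moreover obtain m2 :: int and c2 d2 where "d2 > 0" "\<forall>s\<in>{t-d2..t}. g2 s = of_int m2 * s + c2"
    using assms(2) unfolding locally_int_affine_def by blast
  ultimately show "\<exists>m::int. \<exists>c. \<exists>\<delta>>0. \<forall>s\<in>{t-\<delta>..t}. g1 s - g2 s = of_int m * s + c"
    by (intro exI[of _ "m1 - m2"] exI[of _ "c1 - c2"] exI[of _ "min d1 d2"])
      (auto simp: algebra_simps)
qed

lemma locally_int_affine_reflect:
  assumes "locally_int_affine g"
  shows "locally_int_affine (\<lambda>s. g (L - s))"
  unfolding locally_int_affine_def
proof (intro conjI allI)
  fix t
  obtain m :: int and c d where "d > 0" "\<forall>s\<in>{(L-t)-d..L-t}. g s = of_int m * s + c"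
    using assms unfolding locally_int_affine_def by blast
  then show "\<exists>m::int. \<exists>c. \<exists>\<delta>>0. \<forall>s\<in>{t..t+\<delta>}. g (L - s) = of_int m * s + c"
    by (intro exI[of _ "-m"] exI[of _ "of_int m * L + c"] exI[of _ d]) (auto simp: algebra_simps)
next
  fix t
  obtain m :: int and c d where "d > 0" "\<forall>s\<in>{L-t..(L-t)+d}. g s = of_int m * s + c"
    using assms unfolding locally_int_affine_def by blast
  then show "\<exists>m::int. \<exists>c. \<exists>\<delta>>0. \<forall>s\<in>{t-\<delta>..t}. g (L - s) = of_int m * s + c"
    by (intro exI[of _ "-m"] exI[of _ "of_int m * L + c"] exI[of _ d]) (auto simp: algebra_simps)
qed

lemma rslope_diff:
  assumes "locally_int_affine g1" "locally_int_affine g2"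
  shows "rslope (\<lambda>s. g1 s - g2 s) t = rslope g1 t - rslope g2 t"
proof -
  obtain c1 d1 where "d1 > 0" "\<forall>s\<in>{t..t+d1}. g1 s = rslope g1 t * s + c1"
    using locally_int_affine_right_germ[OF assms(1)] .
  moreover obtain c2 d2 where "d2 > 0" "\<forall>s\<in>{t..t+d2}. g2 s = rslope g2 t * s + c2"
    using locally_int_affine_right_germ[OF assms(2)] .
  ultimately show ?thesis
    by (intro rslope_eqI[where \<delta> = "min d1 d2" and c = "c1 - c2"]) (auto simp: algebra_simps)
qed

lemma lslope_diff:
  assumes "locally_int_affine g1" "locally_int_affine g2"
  shows "lslope (\<lambda>s. g1 s - g2 s) t = lslope g1 t - lslope g2 t"
proof -
  obtain c1 d1 where "d1 > 0" "\<forall>s\<in>{t-d1..t}. g1 s = lslope g1 t * s + c1"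
    using locally_int_affine_left_germ[OF assms(1)] .
  moreover obtain c2 d2 where "d2 > 0" "\<forall>s\<in>{t-d2..t}. g2 s = lslope g2 t * s + c2"
    using locally_int_affine_left_germ[OF assms(2)] .
  ultimately show ?thesis
    by (intro lslope_eqI[where \<delta> = "min d1 d2" and c = "c1 - c2"]) (auto simp: algebra_simps)
qed

lemma rslope_reflect:
  assumes "locally_int_affine g"
  shows "rslope (\<lambda>s. g (L - s)) t = - lslope g (L - t)"
proof -
  obtain c d where "d > 0" "\<forall>s\<in>{(L-t)-d..L-t}. g s = lslope g (L-t) * s + c"
    using locally_int_affine_left_germ[OF assms] .
  then show ?thesis
    by (intro rslope_eqI[where \<delta> = d and c = "lslope g (L-t) * L + c"]) (auto simp: algebra_simps)
qed

lemma lslope_reflect: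
  assumes "locally_int_affine g"
  shows "lslope (\<lambda>s. g (L - s)) t = - rslope g (L - t)"
proof -
  obtain c d where "d > 0" "\<forall>s\<in>{L-t..(L-t)+d}. g s = rslope g (L-t) * s + c"
    using locally_int_affine_right_germ[OF assms] .
  then show ?thesis
    by (intro lslope_eqI[where \<delta> = d and c = "rslope g (L-t) * L + c"]) (auto simp: algebra_simps)
qed

lemma locally_int_affine_isCont:
  assumes "locally_int_affine g"
  shows "isCont g t"
proof -
  obtain c1 d1 where 1: "d1 > 0" "\<forall>s\<in>{t..t+d1}. g s = rslope g t * s + c1"
    using locally_int_affine_right_germ[OF assms] .
  obtain c2 d2 where 2: "d2 > 0" "\<forall>s\<in>{t-d2..t}. g s = lslope g t * s + c2"
    using locally_int_affine_left_germ[OF assms] .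
  have "\<forall>\<^sub>F s in at_right t. rslope g t * s + c1 = g s"
    using eventually_at_right_real[of t "t + d1"] 1 by (auto elim: eventually_mono)
  moreover have "((\<lambda>s. rslope g t * s + c1) \<longlongrightarrow> g t) (at_right t)"
    using 1 by (auto intro!: tendsto_eq_intros)
  ultimately have right: "(g \<longlongrightarrow> g t) (at_right t)"
    by (auto intro: Lim_transform_eventually)
  have "\<forall>\<^sub>F s in at_left t. lslope g t * s + c2 = g s"
    using eventually_at_left_real[of "t - d2" t] 2 by (auto elim: eventually_mono)
  moreover have "((\<lambda>s. lslope g t * s + c2) \<longlongrightarrow> g t) (at_left t)"
    using 2 by (auto intro!: tendsto_eq_intros)
  ultimately have "(g \<longlongrightarrow> g t) (at_left t)"
    by (auto intro: Lim_transform_eventually)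
  with right show ?thesis
    by (simp add: continuous_at filterlim_at_split)
qed

lemma slopes_at_max:
  assumes "locally_int_affine g" and max: "\<forall>s. g s \<le> g r"
  shows "rslope g r \<le> 0" and "0 \<le> lslope g r"
proof -
  obtain c d where "d > 0" "\<forall>s\<in>{r..r+d}. g s = rslope g r * s + c"
    using locally_int_affine_right_germ[OF assms(1)] .
  moreover from this max have "g (r + d) \<le> g r" by blast
  ultimately have "rslope g r * d \<le> 0" by (simp add: algebra_simps)
  with \<open>d > 0\<close> show "rslope g r \<le> 0" by (simp add: mult_le_0_iff)
next
  obtain c d where "d > 0" "\<forall>s\<in>{r-d..r}. g s = lslope g r * s + c"
    using locally_int_affine_left_germ[OF assms(1)] .
  moreover from this max have "g (r - d) \<le> g r" by blast
  ultimately have "0 \<le> lslope g r * d" by (simp add: algebra_simps)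
  with \<open>d > 0\<close> show "0 \<le> lslope g r" by (simp add: zero_le_mult_iff)
qed

lemma locally_const_if_slopes_zero:
  assumes "locally_int_affine g" "rslope g r = 0" "lslope g r = 0"
  shows "\<exists>\<delta>>0. \<forall>s. \<bar>s - r\<bar> < \<delta> \<longrightarrow> g s = g r"
proof -
  obtain c1 d1 where 1: "d1 > 0" "\<forall>s\<in>{r..r+d1}. g s = rslope g r * s + c1"
    using locally_int_affine_right_germ[OF assms(1)] .
  obtain c2 d2 where 2: "d2 > 0" "\<forall>s\<in>{r-d2..r}. g s = lslope g r * s + c2"
    using locally_int_affine_left_germ[OF assms(1)] .
  have "c1 = g r" "c2 = g r"
    using 1(2)[rule_format, of r] 2(2)[rule_format, of r] 1(1) 2(1) assms(2,3) by auto
  then have "g s = g r" if "\<bar>s - r\<bar> < min d1 d2" for s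
    using 1 2 assms(2,3) that by (cases "r \<le> s") auto
  with 1 2 show ?thesis by (intro exI[of _ "min d1 d2"]) auto
qed

lemma rslope_locally_const_if_no_breaks:
  assumes g: "locally_int_affine g" and t: "t \<in> {a<..<b}"
    and no_breaks: "\<forall>t\<in>{a<..<b}. rslope g t = lslope g t"
  shows "\<forall>\<^sub>F s in at t within {a<..<b}. rslope g t = rslope g s"
proof -
  obtain c1 d1 where 1: "d1 > 0" "\<forall>s\<in>{t..t+d1}. g s = rslope g t * s + c1"
    using locally_int_affine_right_germ[OF g] .
  obtain c2 d2 where 2: "d2 > 0" "\<forall>s\<in>{t-d2..t}. g s = lslope g t * s + c2"
    using locally_int_affine_left_germ[OF g] .
  have "rslope g t = rslope g s"
    if s: "s \<in> {a<..<b}" "s \<noteq> t" "dist s t < min d1 d2" for s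
  proof (cases "t < s")
    case True
    then have "rslope g s = rslope g t"
      by (intro rslope_eqI[where c = c1, of "t + d1 - s"]) (use 1 s in \<open>auto simp: dist_real_def\<close>)
    then show ?thesis by simp
  next
    case False
    then have "lslope g s = lslope g t"
      by (intro lslope_eqI[where c = c2, of "s - (t - d2)"]) (use 2 s in \<open>auto simp: dist_real_def\<close>)
    then show ?thesis using no_breaks s t by simp
  qed
  with 1 2 show ?thesis
    unfolding eventually_at by (intro exI[of _ "min d1 d2"]) auto
qed

text \<open>The right slope is locally constant on the connected interval (a, b).\<close>
lemma rslope_eq_lslope_if_no_breaks:
  assumes g: "locally_int_affine g" and "a < b"
    and no_breaks: "\<forall>t\<in>{a<..<b}. rslope g t = lslope g t"
  shows "rslope g a = lslope g b"
proof -
  obtain c1 d1 where 1: "d1 > 0" "\<forall>s\<in>{a..a+d1}. g s = rslope g a * s + c1"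
    using locally_int_affine_right_germ[OF g] .
  obtain c2 d2 where 2: "d2 > 0" "\<forall>s\<in>{b-d2..b}. g s = lslope g b * s + c2"
    using locally_int_affine_left_germ[OF g] .
  obtain \<mu>1 \<mu>2 where \<mu>: "0 < \<mu>1" "\<mu>1 \<le> b - a" "\<mu>1 \<le> d1" "0 < \<mu>2" "\<mu>2 \<le> b - a" "\<mu>2 \<le> d2"
    using 1 2 \<open>a < b\<close> by (metis min.cobounded1 min.cobounded2 min_less_iff_conj diff_gt_0_iff_gt)
  define s1 where "s1 = a + \<mu>1 / 2"
  define s2 where "s2 = b - \<mu>2 / 2"
  have s12: "s1 \<in> {a<..<b}" "s2 \<in> {a<..<b}" and "s1 < a + d1" "b - d2 < s2"
    unfolding s1_def s2_def greaterThanLessThan_iff using \<mu> by linarith+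
  then have "rslope g s1 = rslope g a" "lslope g s2 = lslope g b"
    using 1 2 by (auto intro: rslope_eqI[where c = c1, of "a + d1 - s1"]
        lslope_eqI[where c = c2, of "s2 - (b - d2)"])
  moreover have "rslope g s1 = rslope g s2"
    by (rule connected_local_const[OF _ s12])
      (use rslope_locally_const_if_no_breaks[OF g _ no_breaks] in auto)
  ultimately show ?thesis using no_breaks s12 by simp
qed

lemma sum_slope_jumps:
  assumes g: "locally_int_affine g"
  shows "a < b \<Longrightarrow> finite Z \<Longrightarrow> Z \<subseteq> {a<..<b} \<Longrightarrow>
    \<forall>t\<in>{a<..<b} - Z. rslope g t = lslope g t \<Longrightarrow>
    (\<Sum>t\<in>Z. rslope g t - lslope g t) = lslope g b - rslope g a"
proof (induction "card Z" arbitrary: Z b rule: less_induct)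
  case less
  show ?case
  proof (cases "Z = {}")
    case True
    then show ?thesis using rslope_eq_lslope_if_no_breaks[OF g less.prems(1)] less.prems(4) by simp
  next
    case False
    define z where "z = Max Z"
    have z: "z \<in> Z" "\<forall>t\<in>Z. t \<le> z"
      using False less.prems(2) by (auto simp: z_def)
    then have "a < z" "z < b"
      using less.prems(3) by auto
    note z = z this
    have "Z - {z} \<subseteq> {a<..<z}"
      using less.prems(3) z by fastforce
    moreover have "\<forall>t\<in>{a<..<z} - (Z - {z}). rslope g t = lslope g t"
      using less.prems(4) z by auto
    ultimately have IH: "(\<Sum>t\<in>Z - {z}. rslope g t - lslope g t) = lslope g z - rslope g a"
      using less.hyps[OF card_Diff1_less[OF less.prems(2) z(1)] z(3)] less.prems(2) by blast
    have "\<forall>t\<in>{z<..<b}. rslope g t = lslope g t"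
      using less.prems(4) z by force
    then have "rslope g z = lslope g b"
      using rslope_eq_lslope_if_no_breaks[OF g z(4)] by blast
    with IH show ?thesis
      using z less.prems(2) by (simp add: sum.remove)
  qed
qed

section \<open>Evenness of sums of integers\<close>

definition even_real :: "real \<Rightarrow> bool" where
  "even_real x \<longleftrightarrow> (\<exists>k::int. x = 2 * of_int k)"

lemma even_real_0 [simp]: "even_real 0"
  unfolding even_real_def by (intro exI[of _ 0]) simp

lemma even_real_double: "x \<in> \<int> \<Longrightarrow> even_real (2 * x)"
  unfolding even_real_def by (auto elim: Ints_cases)

lemma even_real_add: "even_real x \<Longrightarrow> even_real y \<Longrightarrow> even_real (x + y)"
  unfolding even_real_def by (metis distrib_left of_int_add)

lemma even_real_sum: "(\<And>x. x \<in> A \<Longrightarrow> even_real (w x)) \<Longrightarrow> even_real (\<Sum>x\<in>A. w x)"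
  by (induction A rule: infinite_finite_induct) (auto intro: even_real_add)

lemma even_real_of_int: "even_real (of_int k) \<longleftrightarrow> even k"
proof
  assume "even_real (of_int k)"
  then obtain m :: int where "of_int k = (of_int (2 * m) :: real)"
    unfolding even_real_def by auto
  then show "even k"
    by (simp only: of_int_eq_iff) simp
qed (auto simp: even_real_def elim: evenE)

text \<open>Summands off the fixed points of an involution pair up.\<close>
lemma even_real_sum_minus_fixed_points:
  assumes "finite A" and "\<And>x. x \<in> A \<Longrightarrow> \<phi> x \<in> A \<and> \<phi> (\<phi> x) = x"
    and "\<And>x. x \<in> A \<Longrightarrow> w (\<phi> x) = w x" and "\<And>x. x \<in> A \<Longrightarrow> w x \<in> \<int>"
  shows "even_real ((\<Sum>x\<in>A. w x) - (\<Sum>x\<in>{x\<in>A. \<phi> x = x}. w x))"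
  using assms
proof (induction "card A" arbitrary: A rule: less_induct)
  case less
  show ?case
  proof (cases "\<forall>x\<in>A. \<phi> x = x")
    case True
    then have "{x\<in>A. \<phi> x = x} = A" by auto
    then show ?thesis by simp
  next
    case False
    then obtain x where x: "x \<in> A" "\<phi> x \<noteq> x" by blast
    define A' where "A' = A - {x, \<phi> x}"
    have "\<phi> x \<in> A" using less.prems x by blast
    have A: "A = insert x (insert (\<phi> x) A')" "x \<notin> A'" "\<phi> x \<notin> A'" "x \<noteq> \<phi> x"
      unfolding A'_def using x \<open>\<phi> x \<in> A\<close> by auto
    have "card A' < card A"
      unfolding A'_def using less.prems(1) x \<open>\<phi> x \<in> A\<close> by (metis Diff_insert2 card_Diff2_less)
    moreover have "\<phi> y \<in> A' \<and> \<phi> (\<phi> y) = y" if "y \<in> A'" for y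
      using that less.prems(2)[of y] less.prems(2)[of x] x unfolding A'_def by auto
    ultimately have IH: "even_real ((\<Sum>y\<in>A'. w y) - (\<Sum>y\<in>{y\<in>A'. \<phi> y = y}. w y))"
      using less.prems(1,3,4) by (intro less.hyps) (auto simp: A'_def)
    have "{y\<in>A'. \<phi> y = y} = {y\<in>A. \<phi> y = y}"
      unfolding A'_def using x less.prems(2) by auto
    moreover have "(\<Sum>y\<in>A. w y) = w x + w (\<phi> x) + (\<Sum>y\<in>A'. w y)"
    proof -
      have "finite A'"
        using less.prems(1) by (simp add: A'_def)
      then show ?thesis
        using A(2-4) by (subst A(1)) simp
    qed
    moreover have "w (\<phi> x) = w x"
      using less.prems(3) x by blast
    ultimately show ?thesis
      using even_real_add[OF even_real_double IH] less.prems(4) x by (simp add: algebra_simps)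
  qed
qed

lemma find_piece_right:
  fixes a :: "nat \<Rightarrow> real"
  shows "\<forall>i<k. a i < a (Suc i) \<Longrightarrow> a 0 \<le> t \<Longrightarrow> t < a k \<Longrightarrow> \<exists>i<k. a i \<le> t \<and> t < a (Suc i)"
  by (induction k) (auto, metis less_Suc_eq not_less)

lemma find_piece_left:
  fixes a :: "nat \<Rightarrow> real"
  shows "\<forall>i<k. a i < a (Suc i) \<Longrightarrow> a 0 < t \<Longrightarrow> t \<le> a k \<Longrightarrow> \<exists>i<k. a i < t \<and> t \<le> a (Suc i)"
  by (induction k) (auto, metis less_Suc_eq not_less)

lemma locally_int_affine_if_pieces:
  assumes mono: "\<forall>i<k. a i < a (Suc i)"
    and before: "\<forall>s\<le>a 0. g s = of_int m0 * s + c0"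
    and pieces: "\<forall>i<k. \<exists>m::int. \<exists>c. \<forall>t\<in>{a i..a (Suc i)}. g t = of_int m * t + c"
    and beyond: "\<forall>s\<ge>a k. g s = of_int m1 * s + c1"
  shows "locally_int_affine g"
proof -
  have "\<exists>m::int. \<exists>c. \<exists>\<delta>>0. \<forall>s\<in>{t..t+\<delta>}. g s = of_int m * s + c" for t
  proof -
    consider "t < a 0" | "a 0 \<le> t" "t < a k" | "a k \<le> t" by linarith
    then show ?thesis
    proof cases
      case 1
      with before show ?thesis by (intro exI[of _ m0] exI[of _ c0] exI[of _ "a 0 - t"]) auto
    next
      case 2
      then obtain i where i: "i < k" "a i \<le> t" "t < a (Suc i)"
        using find_piece_right[OF mono] by blast
      with pieces obtain m :: int and c where "\<forall>s\<in>{a i..a (Suc i)}. g s = of_int m * s + c"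
        by blast
      with i show ?thesis by (intro exI[of _ m] exI[of _ c] exI[of _ "a (Suc i) - t"]) auto
    next
      case 3
      with beyond show ?thesis by (intro exI[of _ m1] exI[of _ c1] exI[of _ 1]) auto
    qed
  qed
  moreover have "\<exists>m::int. \<exists>c. \<exists>\<delta>>0. \<forall>s\<in>{t-\<delta>..t}. g s = of_int m * s + c" for t
  proof -
    consider "t \<le> a 0" | "a 0 < t" "t \<le> a k" | "a k < t" by linarith
    then show ?thesis
    proof cases
      case 1
      with before show ?thesis by (intro exI[of _ m0] exI[of _ c0] exI[of _ 1]) auto
    next
      case 2
      then obtain i where i: "i < k" "a i < t" "t \<le> a (Suc i)"
        using find_piece_left[OF mono] by blast
      with pieces obtain m :: int and c where "\<forall>s\<in>{a i..a (Suc i)}. g s = of_int m * s + c"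
        by blast
      with i show ?thesis by (intro exI[of _ m] exI[of _ c] exI[of _ "t - a i"]) auto
    next
      case 3
      with beyond show ?thesis by (intro exI[of _ m1] exI[of _ c1] exI[of _ "t - a k"]) auto
    qed
  qed
  ultimately show ?thesis
    unfolding locally_int_affine_def by blast
qed

lemma piecewise_int_affine_imp_locally_int_affine:
  assumes "piecewise_int_affine g L"
    and left: "\<forall>s\<le>0. g s = c0" and right: "\<forall>s. L \<le> ereal s \<longrightarrow> g s = c1"
  shows "locally_int_affine g"
proof -
  obtain a :: "nat \<Rightarrow> real" and k where a0: "a 0 = 0" and mono: "\<forall>i<k. a i < a (Suc i)"
    and fin: "L \<noteq> \<infinity> \<longrightarrow> ereal (a k) = L"
    and pieces: "\<forall>i<k. \<exists>m::int. \<exists>c. \<forall>t\<in>{a i..a (Suc i)}. g t = of_int m * t + c"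
    and tail: "L = \<infinity> \<longrightarrow> (\<exists>m::int. \<exists>c. \<forall>t\<ge>a k. g t = of_int m * t + c)"
    using assms(1) unfolding piecewise_int_affine_def by blast
  have before: "\<forall>s\<le>a 0. g s = of_int 0 * s + c0"
    using left a0 by simp
  obtain m :: int and c where beyond: "\<forall>s\<ge>a k. g s = of_int m * s + c"
  proof (cases "L = \<infinity>")
    case False
    then have "\<forall>s\<ge>a k. g s = of_int 0 * s + c1"
      using fin right by auto
    with that show thesis by blast
  qed (use tail in blast)
  show ?thesis
    by (rule locally_int_affine_if_pieces[OF mono before pieces beyond])
qed

lemma affine_sequence_tendsto_imp_const:
  assumes "(\<lambda>n. m * (a + real n) + c) \<longlonglongrightarrow> l"
  shows "m = 0" and "c = l"
proof -
  have "(\<lambda>n. (m * (a + real (Suc n)) + c) - (m * (a + real n) + c)) \<longlonglongrightarrow> l - l"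
    using tendsto_diff[OF assms[THEN LIMSEQ_Suc] assms] by simp
  then show "m = 0"
    by (simp add: algebra_simps LIMSEQ_const_iff)
  with assms show "c = l"
    by (simp add: LIMSEQ_const_iff)
qed

section \<open>Edges and the topology of the curve\<close>

lemma openin_ereal_interval_if_locally:
  fixes L :: ereal and S :: "ereal set"
  assumes "S \<subseteq> {0..L}"
    and finite_pts: "\<And>r. ereal r \<in> S \<Longrightarrow>
      \<exists>\<delta>>0. \<forall>s. 0 \<le> s \<and> ereal s \<le> L \<and> \<bar>s - r\<bar> < \<delta> \<longrightarrow> ereal s \<in> S"
    and infinity: "\<infinity> \<in> S \<Longrightarrow> \<exists>a. \<forall>s. 0 \<le> s \<and> a < s \<longrightarrow> ereal s \<in> S"
  shows "openin (top_of_set {0..L}) S"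
  unfolding openin_subopen[of _ S]
proof
  fix t assume "t \<in> S"
  with assms(1) have t: "0 \<le> t" "t \<le> L" by auto
  show "\<exists>T. openin (top_of_set {0..L}) T \<and> t \<in> T \<and> T \<subseteq> S"
  proof (cases t)
    case PInf
    then obtain a where a: "\<forall>s. 0 \<le> s \<and> a < s \<longrightarrow> ereal s \<in> S"
      using infinity \<open>t \<in> S\<close> by blast
    have "{0..L} \<inter> {ereal a<..} \<subseteq> S"
    proof
      fix x assume "x \<in> {0..L} \<inter> {ereal a<..}"
      with a PInf \<open>t \<in> S\<close> show "x \<in> S" by (cases x) auto
    qed
    with t PInf show ?thesis
      by (intro exI[of _ "{0..L} \<inter> {ereal a<..}"]) (auto intro: openin_open_Int)
  next
    case (real r)
    then obtain d where d: "d > 0" "\<forall>s. 0 \<le> s \<and> ereal s \<le> L \<and> \<bar>s - r\<bar> < d \<longrightarrow> ereal s \<in> S"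
      using finite_pts \<open>t \<in> S\<close> by blast
    have "{0..L} \<inter> {ereal (r - d)<..<ereal (r + d)} \<subseteq> S"
    proof
      fix x assume "x \<in> {0..L} \<inter> {ereal (r - d)<..<ereal (r + d)}"
      with d show "x \<in> S" by (cases x) auto
    qed
    with t real d show ?thesis
      by (intro exI[of _ "{0..L} \<inter> {ereal (r - d)<..<ereal (r + d)}"]) (auto intro: openin_open_Int)
  qed (use t in simp)
qed

context
  fixes src tgt :: "'e \<Rightarrow> 'v" and len :: "'e \<Rightarrow> ereal"
begin

lemma openin_gtop:
  "openin (gtop src tgt len) U \<longleftrightarrow> U \<subseteq> gpts len \<and>
     (\<forall>e. openin (top_of_set {0..len e}) {t \<in> {0..len e}. edge_pt src tgt len e t \<in> U})"
  unfolding gtop_def by (simp only: topology_inverse'[OF istopology_gtop])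

lemma edge_pt_in_gpts: "edge_pt src tgt len e t \<in> gpts len"
  by (cases t) (auto simp: edge_pt_def gpts_def)

lemma topspace_gtop: "topspace (gtop src tgt len) = gpts len"
proof
  show "topspace (gtop src tgt len) \<subseteq> gpts len"
    unfolding topspace_def using openin_gtop by blast
  have "openin (gtop src tgt len) (gpts len)"
    unfolding openin_gtop by (simp add: edge_pt_in_gpts del: atLeastAtMost_iff)
  then show "gpts len \<subseteq> topspace (gtop src tgt len)"
    by (simp add: openin_subset)
qed

lemma continuous_map_edge_pt:
  "continuous_map (top_of_set {0..len e}) (gtop src tgt len) (edge_pt src tgt len e)"
  unfolding continuous_map_def topspace_gtop
  using edge_pt_in_gpts by (auto simp: openin_gtop)

lemma efun_nonpos: "s \<le> 0 \<Longrightarrow> efun src tgt len h e s = h (Vert (src e))"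
  by (simp add: efun_def edge_pt_def)

lemma efun_beyond: "0 < s \<Longrightarrow> len e \<le> ereal s \<Longrightarrow> efun src tgt len h e s = h (Vert (tgt e))"
  by (simp add: efun_def edge_pt_def)

lemma efun_Inner: "0 < s \<Longrightarrow> ereal s < len e \<Longrightarrow> efun src tgt len h e s = h (Inner e s)"
  by (auto simp: efun_def edge_pt_def)

definition edgewise_int_affine :: "(('v, 'e) gpt \<Rightarrow> real) \<Rightarrow> bool" where
  "edgewise_int_affine h \<longleftrightarrow> (\<forall>e. locally_int_affine (efun src tgt len h e))"

definition settles_on_legs :: "(('v, 'e) gpt \<Rightarrow> real) \<Rightarrow> bool" where
  "settles_on_legs h \<longleftrightarrow>
     (\<forall>e. len e = \<infinity> \<longrightarrow> (\<exists>a. \<forall>s\<ge>a. efun src tgt len h e s = h (Vert (tgt e))))"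

lemma openin_gtop_if_locally:
  assumes loc: "\<And>e r. Q (efun src tgt len h e r) \<Longrightarrow>
      \<exists>\<delta>>0. \<forall>s. \<bar>s - r\<bar> < \<delta> \<longrightarrow> Q (efun src tgt len h e s)"
    and "settles_on_legs h"
  shows "openin (gtop src tgt len) {p \<in> gpts len. Q (h p)}"
  unfolding openin_gtop
proof (intro conjI allI)
  fix e
  let ?S = "{t \<in> {0..len e}. edge_pt src tgt len e t \<in> {p \<in> gpts len. Q (h p)}}"
  show "openin (top_of_set {0..len e}) ?S"
  proof (rule openin_ereal_interval_if_locally)
    fix r assume "ereal r \<in> ?S"
    then obtain d where "d > 0" "\<forall>s. \<bar>s - r\<bar> < d \<longrightarrow> Q (efun src tgt len h e s)"
      using loc[of e r] by (auto simp: efun_def)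
    then show "\<exists>\<delta>>0. \<forall>s. 0 \<le> s \<and> ereal s \<le> len e \<and> \<bar>s - r\<bar> < \<delta> \<longrightarrow> ereal s \<in> ?S"
      by (auto simp: efun_def edge_pt_in_gpts)
  next
    assume "\<infinity> \<in> ?S"
    then have "len e = \<infinity>" "Q (h (Vert (tgt e)))"
      by (auto simp: edge_pt_def)
    moreover obtain a where "\<forall>s\<ge>a. efun src tgt len h e s = h (Vert (tgt e))"
      using \<open>settles_on_legs h\<close> \<open>len e = \<infinity>\<close> unfolding settles_on_legs_def by blast
    ultimately show "\<exists>a. \<forall>s. 0 \<le> s \<and> a < s \<longrightarrow> ereal s \<in> ?S"
      by (intro exI[of _ a]) (auto simp: efun_def edge_pt_in_gpts)
  qed blast
qed blast

end

section \<open>Rational functions and the maximum principle\<close>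

locale metric_graph =
  fixes src tgt :: "'e::finite \<Rightarrow> 'v::finite" and len :: "'e \<Rightarrow> ereal"
  assumes len_pos: "0 < len e"
begin

lemma len_cases:
  obtains "len e = \<infinity>" | L where "len e = ereal L" "0 < L"
  using len_pos[of e] by (cases "len e") auto

lemma efun_beyond_len:
  assumes "len e \<le> ereal s"
  shows "efun src tgt len h e s = h (Vert (tgt e))"
proof (rule efun_beyond)
  show "0 < s"
    using len_pos[of e] assms by (metis ereal_less(2) order_less_le_trans)
qed (fact assms)

lemma rational_fn_edgewise_int_affine:
  assumes "rational_fn src tgt len f"
  shows "edgewise_int_affine src tgt len f"
  unfolding edgewise_int_affine_def
proof
  fix e
  have "piecewise_int_affine (efun src tgt len f e) (len e)"
    using assms unfolding rational_fn_def by blast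
  then show "locally_int_affine (efun src tgt len f e)"
    by (rule piecewise_int_affine_imp_locally_int_affine) (auto simp: efun_nonpos efun_beyond_len)
qed

text \<open>Continuity at the point at infinity forces the last affine piece on a leg to be constant.\<close>
lemma rational_fn_settles_on_legs:
  assumes rf: "rational_fn src tgt len f"
  shows "settles_on_legs src tgt len f"
  unfolding settles_on_legs_def
proof (intro allI impI)
  fix e assume leg: "len e = \<infinity>"
  obtain a :: "nat \<Rightarrow> real" and k where
    "len e = \<infinity> \<longrightarrow> (\<exists>m::int. \<exists>c. \<forall>t\<ge>a k. efun src tgt len f e t = of_int m * t + c)"
    using rf unfolding rational_fn_def piecewise_int_affine_def by blast
  with leg obtain m :: int and c where tail: "\<forall>t\<ge>a k. efun src tgt len f e t = of_int m * t + c"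
    by blast
  have "continuous_map (gtop src tgt len) euclideanreal f"
    using rf unfolding rational_fn_def by (rule conjunct1)
  then have "continuous_map (top_of_set {0..len e}) euclideanreal (f \<circ> edge_pt src tgt len e)"
    by (rule continuous_map_compose[OF continuous_map_edge_pt])
  then have "continuous_on {0..\<infinity>} (f \<circ> edge_pt src tgt len e)"
    unfolding leg by (simp only: continuous_map_iff_continuous)
  moreover have "(\<lambda>n. ereal (\<bar>a k\<bar> + real n)) \<longlonglongrightarrow> \<infinity>"
    unfolding tendsto_PInfty_eq_at_top
    by (intro filterlim_tendsto_add_at_top[OF tendsto_const filterlim_real_sequentially])
  ultimately have "(\<lambda>n. (f \<circ> edge_pt src tgt len e) (ereal (\<bar>a k\<bar> + real n)))
      \<longlonglongrightarrow> (f \<circ> edge_pt src tgt len e) \<infinity>"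
    by (rule continuous_on_tendsto_compose) auto
  then have "(\<lambda>n. of_int m * (\<bar>a k\<bar> + real n) + c) \<longlonglongrightarrow> f (Vert (tgt e))"
    using tail leg by (simp add: efun_def edge_pt_def)
  then have "of_int m = (0::real)" "c = f (Vert (tgt e))"
    by (rule affine_sequence_tendsto_imp_const)+
  with tail show "\<exists>a. \<forall>s\<ge>a. efun src tgt len f e s = f (Vert (tgt e))"
    by auto
qed

definition src_slope :: "(('v, 'e) gpt \<Rightarrow> real) \<Rightarrow> 'e \<Rightarrow> real" where
  "src_slope f e = rslope (efun src tgt len f e) 0"

text \<open>As in lap, a leg contributes no slope at its point at infinity.\<close>
definition tgt_slope :: "(('v, 'e) gpt \<Rightarrow> real) \<Rightarrow> 'e \<Rightarrow> real" where
  "tgt_slope f e =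
     (if len e = \<infinity> then 0 else - lslope (efun src tgt len f e) (real_of_ereal (len e)))"

definition out_slope :: "(('v, 'e) gpt \<Rightarrow> real) \<Rightarrow> 'v \<Rightarrow> 'e \<Rightarrow> real" where
  "out_slope f v e =
     (if src e = v then src_slope f e else 0) + (if tgt e = v then tgt_slope f e else 0)"

lemma lap_Vert: "lap src tgt len f (Vert v) = (\<Sum>e\<in>UNIV. out_slope f v e)"
proof -
  have "(if tgt e = v then tgt_slope f e else 0) =
      (if tgt e = v \<and> len e \<noteq> \<infinity> then - lslope (efun src tgt len f e) (real_of_ereal (len e)) else 0)"
    for e by (simp add: tgt_slope_def)
  then show ?thesis
    by (simp add: lap_def out_slope_def src_slope_def sum.distrib flip: sum.inter_filter)
qed

lemma lap_Inner:
  "lap src tgt len f (Inner e t) = rslope (efun src tgt len f e) t - lslope (efun src tgt len f e) t"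
  by (simp add: lap_def)

lemma efun_diff:
  "efun src tgt len (\<lambda>q. F q - f q) e = (\<lambda>s. efun src tgt len F e s - efun src tgt len f e s)"
  by (simp add: efun_def fun_eq_iff)

lemma edgewise_int_affine_diff:
  "edgewise_int_affine src tgt len F \<Longrightarrow> edgewise_int_affine src tgt len f \<Longrightarrow>
    edgewise_int_affine src tgt len (\<lambda>q. F q - f q)"
  unfolding edgewise_int_affine_def efun_diff by (blast intro: locally_int_affine_diff)

lemma settles_on_legs_diff:
  assumes "settles_on_legs src tgt len F" "settles_on_legs src tgt len f"
  shows "settles_on_legs src tgt len (\<lambda>q. F q - f q)"
  unfolding settles_on_legs_def efun_diff
proof (intro allI impI)
  fix e assume "len e = \<infinity>"
  then obtain a1 a2 where "\<forall>s\<ge>a1. efun src tgt len F e s = F (Vert (tgt e))"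
    "\<forall>s\<ge>a2. efun src tgt len f e s = f (Vert (tgt e))"
    using assms unfolding settles_on_legs_def by blast
  then show "\<exists>a. \<forall>s\<ge>a. efun src tgt len F e s - efun src tgt len f e s =
      F (Vert (tgt e)) - f (Vert (tgt e))"
    by (intro exI[of _ "max a1 a2"]) auto
qed

lemma lap_diff:
  assumes "edgewise_int_affine src tgt len F" "edgewise_int_affine src tgt len f"
  shows "lap src tgt len (\<lambda>q. F q - f q) p = lap src tgt len F p - lap src tgt len f p"
proof -
  have r: "rslope (efun src tgt len (\<lambda>q. F q - f q) e) t =
      rslope (efun src tgt len F e) t - rslope (efun src tgt len f e) t"
    and l: "lslope (efun src tgt len (\<lambda>q. F q - f q) e) t =
      lslope (efun src tgt len F e) t - lslope (efun src tgt len f e) t" for e t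
    using assms unfolding efun_diff edgewise_int_affine_def
    by (blast intro: rslope_diff lslope_diff)+
  show ?thesis
  proof (cases p)
    case (Vert v)
    have slopes: "src_slope (\<lambda>q. F q - f q) e = src_slope F e - src_slope f e"
      "tgt_slope (\<lambda>q. F q - f q) e = tgt_slope F e - tgt_slope f e" for e
      by (simp_all add: src_slope_def tgt_slope_def r l)
    show ?thesis
      unfolding Vert lap_Vert sum_subtractf[symmetric] by (intro sum.cong) (auto simp: out_slope_def slopes)
  qed (simp add: lap_Inner r l)
qed

lemma settles_beyond:
  assumes "settles_on_legs src tgt len h"
  obtains b where "0 \<le> b" "\<forall>s\<ge>b. efun src tgt len h e s = efun src tgt len h e b"
proof (cases rule: len_cases[of e])
  case 1
  then obtain a where "\<forall>s\<ge>a. efun src tgt len h e s = h (Vert (tgt e))"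
    using assms unfolding settles_on_legs_def by blast
  then show thesis by (intro that[of "\<bar>a\<bar>"]) auto
next
  case (2 L)
  then show thesis by (intro that[of L]) (auto simp: efun_beyond_len)
qed

lemma image_gpts_eq_image_edges:
  assumes b_nonneg: "\<And>e. 0 \<le> b e"
    and b_const: "\<And>e s. b e \<le> s \<Longrightarrow> efun src tgt len h e s = efun src tgt len h e (b e)"
  shows "h ` gpts len = h ` range Vert \<union> (\<Union>e. efun src tgt len h e ` {0..b e})"
proof
  have "efun src tgt len h e s \<in> h ` gpts len" for e s
    unfolding efun_def by (intro imageI edge_pt_in_gpts)
  moreover have "h ` range Vert \<subseteq> h ` gpts len"
    by (intro image_mono) (simp add: gpts_def)
  ultimately show "h ` range Vert \<union> (\<Union>e. efun src tgt len h e ` {0..b e}) \<subseteq> h ` gpts len"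
    by blast
  have edge: "efun src tgt len h e t \<in> efun src tgt len h e ` {0..b e}" if "0 < t" for e t
  proof (cases "t \<le> b e")
    case False
    then have "efun src tgt len h e t = efun src tgt len h e (b e)"
      by (intro b_const) simp
    with b_nonneg show ?thesis by (metis atLeastAtMost_iff image_eqI order_refl)
  qed (use that in auto)
  have "h p \<in> h ` range Vert \<union> (\<Union>e. efun src tgt len h e ` {0..b e})" if "p \<in> gpts len" for p
  proof (cases p)
    case (Inner e t)
    with that have "0 < t" "ereal t < len e"
      by (auto simp: gpts_def)
    with Inner edge[of t e] show ?thesis
      by (auto simp: efun_Inner)
  qed simp
  then show "h ` gpts len \<subseteq> h ` range Vert \<union> (\<Union>e. efun src tgt len h e ` {0..b e})"
    by blast
qed

lemma compact_image_gpts: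
  assumes "edgewise_int_affine src tgt len h" "settles_on_legs src tgt len h"
  shows "compact (h ` gpts len)"
proof -
  have "\<forall>e. \<exists>b. 0 \<le> b \<and> (\<forall>s\<ge>b. efun src tgt len h e s = efun src tgt len h e b)"
    using settles_beyond[OF assms(2)] by blast
  then obtain b where "\<forall>e. 0 \<le> b e \<and> (\<forall>s\<ge>b e. efun src tgt len h e s = efun src tgt len h e (b e))"
    by (rule choice[THEN exE])
  then have image: "h ` gpts len = h ` range Vert \<union> (\<Union>e. efun src tgt len h e ` {0..b e})"
    by (intro image_gpts_eq_image_edges) blast+
  have "continuous_on {0..b e} (efun src tgt len h e)" for e
    using assms(1) locally_int_affine_isCont unfolding edgewise_int_affine_def
    by (intro continuous_at_imp_continuous_on) blast
  then have "compact (efun src tgt len h e ` {0..b e})" for e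
    by (rule compact_continuous_image) simp
  moreover have "compact (h ` range Vert)"
    by (simp add: finite_imp_compact)
  ultimately show ?thesis
    unfolding image by (intro compact_Un compact_UN) auto
qed

lemma edgewise_attains_max:
  assumes "edgewise_int_affine src tgt len h" "settles_on_legs src tgt len h"
  obtains p0 where "p0 \<in> gpts len" "\<forall>p\<in>gpts len. h p \<le> h p0"
proof -
  have "h ` gpts len \<noteq> {}"
    by (auto simp: gpts_def)
  then show thesis
    using compact_attains_sup[OF compact_image_gpts[OF assms]] that by blast
qed

lemma efun_le_if_bounded:
  assumes "\<forall>p\<in>gpts len. h p \<le> M"
  shows "efun src tgt len h e s \<le> M"
  using assms edge_pt_in_gpts[of src tgt len e "ereal s"] unfolding efun_def by blast

lemma src_slope_nonpos_at_max:
  assumes "edgewise_int_affine src tgt len h" and max: "\<forall>p\<in>gpts len. h p \<le> h (Vert (src e))"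
  shows "src_slope h e \<le> 0"
proof -
  have "\<forall>s. efun src tgt len h e s \<le> efun src tgt len h e 0"
    using max by (simp add: efun_le_if_bounded efun_nonpos)
  then show ?thesis
    using slopes_at_max(1) assms(1) unfolding src_slope_def edgewise_int_affine_def by blast
qed

lemma tgt_slope_nonpos_at_max:
  assumes "edgewise_int_affine src tgt len h" and max: "\<forall>p\<in>gpts len. h p \<le> h (Vert (tgt e))"
  shows "tgt_slope h e \<le> 0"
proof (cases rule: len_cases[of e])
  case (2 L)
  then have "\<forall>s. efun src tgt len h e s \<le> efun src tgt len h e L"
    using max by (simp add: efun_le_if_bounded efun_beyond_len)
  with 2 show ?thesis
    using slopes_at_max(2) assms(1) unfolding tgt_slope_def edgewise_int_affine_def by force
qed (simp add: tgt_slope_def)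

lemma harmonic_vertex_slopes_at_max:
  assumes h: "edgewise_int_affine src tgt len h"
    and max: "\<forall>p\<in>gpts len. h p \<le> h (Vert v)" and harm: "lap src tgt len h (Vert v) = 0"
  shows "src e = v \<Longrightarrow> src_slope h e = 0" and "tgt e = v \<Longrightarrow> tgt_slope h e = 0"
proof -
  have src_nonpos: "src e = v \<Longrightarrow> src_slope h e \<le> 0" and tgt_nonpos: "tgt e = v \<Longrightarrow> tgt_slope h e \<le> 0" for e
    using src_slope_nonpos_at_max[OF h] tgt_slope_nonpos_at_max[OF h] max by blast+
  have "0 \<le> - out_slope h v e" for e
    unfolding out_slope_def using src_nonpos[of e] tgt_nonpos[of e]
    by (cases "src e = v"; cases "tgt e = v") simp_all
  moreover have "(\<Sum>e\<in>UNIV. - out_slope h v e) = 0"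
    using harm unfolding sum_negf lap_Vert by simp
  ultimately have "out_slope h v e = 0"
    by (simp add: sum_nonneg_eq_0_iff)
  then show "src e = v \<Longrightarrow> src_slope h e = 0" and "tgt e = v \<Longrightarrow> tgt_slope h e = 0"
    using src_nonpos[of e] tgt_nonpos[of e] unfolding out_slope_def by (auto split: if_splits)
qed

lemma efun_slopes_before_src:
  shows "r < 0 \<Longrightarrow> rslope (efun src tgt len h e) r = 0"
    and "r \<le> 0 \<Longrightarrow> lslope (efun src tgt len h e) r = 0"
  using rslope_eqI[where m = 0 and c = "h (Vert (src e))" and \<delta> = "-r"]
    lslope_eqI[where m = 0 and c = "h (Vert (src e))" and \<delta> = 1]
  by (auto simp: efun_nonpos)

lemma efun_slopes_beyond_tgt:
  assumes "len e = ereal L"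
  shows "L \<le> r \<Longrightarrow> rslope (efun src tgt len h e) r = 0"
    and "L < r \<Longrightarrow> lslope (efun src tgt len h e) r = 0"
  using assms rslope_eqI[where m = 0 and c = "h (Vert (tgt e))" and \<delta> = 1]
    lslope_eqI[where m = 0 and c = "h (Vert (tgt e))" and \<delta> = "r - L"]
  by (auto simp: efun_beyond_len)

lemma harmonic_edge_slopes_at_max:
  assumes h: "edgewise_int_affine src tgt len h"
    and max: "\<forall>p\<in>gpts len. h p \<le> M" and harm: "\<forall>p\<in>gpts len. lap src tgt len h p = 0"
    and at_max: "efun src tgt len h e r = M"
  shows "rslope (efun src tgt len h e) r = 0 \<and> lslope (efun src tgt len h e) r = 0"
proof -
  let ?g = "efun src tgt len h e"
  have vertex_max: "\<forall>p\<in>gpts len. h p \<le> h (Vert v)" if "h (Vert v) = M" for v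
    using max that by simp
  have vertex_harm: "lap src tgt len h (Vert v) = 0" for v
    using harm by (simp add: gpts_def)
  consider "r < 0" | "r = 0" | "0 < r" "ereal r < len e" | L where "len e = ereal L" "L \<le> r"
    using len_pos[of e] by (cases "len e") force+
  then show ?thesis
  proof cases
    case 2
    with at_max have "h (Vert (src e)) = M"
      by (simp add: efun_nonpos)
    then have "src_slope h e = 0"
      using harmonic_vertex_slopes_at_max(1)[OF h vertex_max vertex_harm] by blast
    with 2 show ?thesis
      by (simp add: src_slope_def efun_slopes_before_src)
  next
    case 3
    have "locally_int_affine ?g" "\<forall>s. ?g s \<le> ?g r"
      using h max at_max efun_le_if_bounded unfolding edgewise_int_affine_def by metis+
    then have "rslope ?g r \<le> 0" "0 \<le> lslope ?g r"
      by (rule slopes_at_max)+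
    moreover have "lap src tgt len h (Inner e r) = 0"
      using 3 harm by (simp add: gpts_def)
    ultimately show ?thesis
      by (simp add: lap_Inner)
  next
    case (4 L)
    moreover have "lslope ?g r = 0"
    proof -
      from 4 at_max have "r = L \<Longrightarrow> h (Vert (tgt e)) = M"
        by (simp add: efun_beyond_len)
      then have "r = L \<Longrightarrow> tgt_slope h e = 0"
        using harmonic_vertex_slopes_at_max(2)[OF h vertex_max vertex_harm] by blast
      with 4 show ?thesis
        by (cases "r = L") (simp_all add: tgt_slope_def efun_slopes_beyond_tgt)
    qed
    ultimately show ?thesis
      by (cases "r = L") (simp_all add: efun_slopes_beyond_tgt)
  qed (simp add: efun_slopes_before_src)
qed

text \<open>Maximum principle: the set where a harmonic function attains its maximum is open, and it
  is closed, so by connectedness it is everything.\<close>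
lemma harmonic_imp_const:
  assumes conn: "connected_space (gtop src tgt len)"
    and h: "edgewise_int_affine src tgt len h" "settles_on_legs src tgt len h"
    and harm: "\<forall>p\<in>gpts len. lap src tgt len h p = 0"
  obtains c where "\<forall>p\<in>gpts len. h p = c"
proof -
  obtain p0 where p0: "p0 \<in> gpts len" "\<forall>p\<in>gpts len. h p \<le> h p0"
    using edgewise_attains_max[OF h] .
  have g: "locally_int_affine (efun src tgt len h e)" for e
    using h(1) unfolding edgewise_int_affine_def by blast
  have "openin (gtop src tgt len) {p \<in> gpts len. h p = h p0}"
  proof (rule openin_gtop_if_locally[OF _ h(2)])
    fix e r assume "efun src tgt len h e r = h p0"
    with harmonic_edge_slopes_at_max[OF h(1) p0(2) harm this] show
      "\<exists>\<delta>>0. \<forall>s. \<bar>s - r\<bar> < \<delta> \<longrightarrow> efun src tgt len h e s = h p0"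
      using locally_const_if_slopes_zero[OF g] by metis
  qed
  moreover have "openin (gtop src tgt len) {p \<in> gpts len. h p < h p0}"
  proof (rule openin_gtop_if_locally[OF _ h(2)])
    fix e r assume below: "efun src tgt len h e r < h p0"
    with locally_int_affine_isCont[OF g] have "\<forall>\<^sub>F s in at r. efun src tgt len h e s < h p0"
      unfolding isCont_def by (rule order_tendstoD(2))
    then obtain d where "d > 0" "\<forall>s. s \<noteq> r \<and> \<bar>s - r\<bar> < d \<longrightarrow> efun src tgt len h e s < h p0"
      unfolding eventually_at dist_real_def by auto
    with below show "\<exists>\<delta>>0. \<forall>s. \<bar>s - r\<bar> < \<delta> \<longrightarrow> efun src tgt len h e s < h p0"
      by metis
  qed
  moreover have "topspace (gtop src tgt len) - {p \<in> gpts len. h p = h p0} = {p \<in> gpts len. h p < h p0}"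
    using p0(2) by (auto simp: topspace_gtop order_le_less)
  ultimately have "{p \<in> gpts len. h p = h p0} = topspace (gtop src tgt len)"
    using conn p0(1) unfolding connected_space_clopen_in closedin_def
    by (metis (mono_tags, lifting) empty_iff mem_Collect_eq topspace_gtop subsetI)
  then show thesis
    using that[of "h p0"] by (auto simp: topspace_gtop)
qed

lemma out_slope_in_Ints:
  assumes "edgewise_int_affine src tgt len h"
  shows "out_slope h v e \<in> \<int>"
  using assms rslope_in_Ints lslope_in_Ints
  unfolding edgewise_int_affine_def out_slope_def src_slope_def tgt_slope_def by auto

lemma sum_lap_edge_interior:
  assumes h: "edgewise_int_affine src tgt len h" "settles_on_legs src tgt len h"
    and "finite Z" and Z: "Z \<subseteq> {t. 0 < t \<and> ereal t < len e}"
    and no_jumps: "\<And>t. 0 < t \<Longrightarrow> ereal t < len e \<Longrightarrow> t \<notin> Z \<Longrightarrow> lap src tgt len h (Inner e t) = 0"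
  shows "(\<Sum>t\<in>Z. lap src tgt len h (Inner e t)) = - (src_slope h e + tgt_slope h e)"
proof -
  let ?g = "efun src tgt len h e"
  have g: "locally_int_affine ?g"
    using h(1) unfolding edgewise_int_affine_def by blast
  obtain b where b: "0 < b" "Z \<subseteq> {0<..<b}" "{0<..<b} \<subseteq> {t. ereal t < len e}"
    and end_slope: "lslope ?g b = - tgt_slope h e"
  proof (cases rule: len_cases[of e])
    case 1
    then obtain a where a: "\<forall>s\<ge>a. ?g s = h (Vert (tgt e))"
      using h(2) unfolding settles_on_legs_def by blast
    define b where "b = max (\<bar>a\<bar> + 1) (Max (insert 0 Z) + 1)"
    have "t < b" if "t \<in> Z" for t
    proof -
      have "t \<le> Max (insert 0 Z)"
        using that \<open>finite Z\<close> by simp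
      then show ?thesis
        unfolding b_def by linarith
    qed
    moreover have "lslope ?g b = 0"
      by (rule lslope_eqI[where m = 0 and c = "h (Vert (tgt e))" and \<delta> = 1]) (use a in \<open>auto simp: b_def\<close>)
    ultimately show thesis
      using Z 1 by (intro that[of b]) (auto simp: b_def tgt_slope_def)
  next
    case (2 L)
    with Z show thesis
      by (intro that[of L]) (auto simp: tgt_slope_def)
  qed
  have "(\<Sum>t\<in>Z. rslope ?g t - lslope ?g t) = lslope ?g b - rslope ?g 0"
    using b no_jumps by (intro sum_slope_jumps[OF g \<open>0 < b\<close> \<open>finite Z\<close>]) (auto simp: lap_Inner)
  then show ?thesis
    using end_slope by (simp add: lap_Inner src_slope_def)
qed

lemma sum_lap_support_eq_deg_on_diff:
  assumes "divisor len D1" "divisor len D2"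
    and f_lap: "\<forall>p\<in>gpts len. real_of_int (D2 p - D1 p) = lap src tgt len f p"
    and "S \<subseteq> gpts len"
  defines "U \<equiv> {p \<in> S. D1 p \<noteq> 0 \<or> D2 p \<noteq> 0}"
  shows "finite U" and "U \<subseteq> S" and "\<And>p. p \<in> S \<Longrightarrow> p \<notin> U \<Longrightarrow> lap src tgt len f p = 0"
    and "(\<Sum>p\<in>U. lap src tgt len f p) = of_int (deg_on D2 S - deg_on D1 S)"
proof -
  have "U \<subseteq> {p. D1 p \<noteq> 0} \<union> {p. D2 p \<noteq> 0}"
    by (auto simp: U_def)
  then show "finite U"
    using assms(1,2) unfolding divisor_def by (auto intro: finite_subset)
  show "U \<subseteq> S" by (simp add: U_def)
  show "lap src tgt len f p = 0" if "p \<in> S" "p \<notin> U" for p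
    using that f_lap assms(4) by (force simp: U_def)
  have "deg_on D S = (\<Sum>p\<in>U. D p)" if "D = D1 \<or> D = D2" for D
    unfolding deg_on_def using that \<open>finite U\<close>
    by (intro sum.mono_neutral_left) (auto simp: U_def)
  moreover have "(\<Sum>p\<in>U. lap src tgt len f p) = of_int ((\<Sum>p\<in>U. D2 p) - (\<Sum>p\<in>U. D1 p))"
    using f_lap assms(4) unfolding of_int_diff of_int_sum sum_subtractf[symmetric]
    by (intro sum.cong) (auto simp: U_def)
  ultimately show "(\<Sum>p\<in>U. lap src tgt len f p) = of_int (deg_on D2 S - deg_on D1 S)"
    by simp
qed

end

section \<open>The real structure\<close>

locale real_metric_graph = metric_graph src tgt len
  for src tgt :: "'e::finite \<Rightarrow> 'v::finite" and len :: "'e \<Rightarrow> ereal" +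
  fixes \<tau> :: "'v \<Rightarrow> 'v" and \<sigma> :: "'e \<Rightarrow> 'e" and fl :: "'e \<Rightarrow> bool"
  assumes real_structure: "real_structure src tgt len \<tau> \<sigma> fl"
begin

abbreviation \<iota> :: "('v, 'e) gpt \<Rightarrow> ('v, 'e) gpt" where
  "\<iota> \<equiv> conj_pt len \<tau> \<sigma> fl"

lemma tau_tau [simp]: "\<tau> (\<tau> v) = v"
  and sigma_sigma [simp]: "\<sigma> (\<sigma> e) = e"
  and len_sigma [simp]: "len (\<sigma> e) = len e"
  and fl_sigma [simp]: "fl (\<sigma> e) = fl e"
  and flipped_finite: "fl e \<Longrightarrow> len e \<noteq> \<infinity>"
  and src_sigma: "src (\<sigma> e) = \<tau> (if fl e then tgt e else src e)"
  and tgt_sigma: "tgt (\<sigma> e) = \<tau> (if fl e then src e else tgt e)"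
  using real_structure unfolding real_structure_def by auto

lemma tau_eq_iff: "\<tau> x = y \<longleftrightarrow> x = \<tau> y"
  by (metis tau_tau)

lemma flipped_len:
  assumes "fl e"
  obtains L where "len e = ereal L" "0 < L"
  using flipped_finite[OF assms] by (cases rule: len_cases[of e]) auto

lemma conj_Vert [simp]: "\<iota> (Vert v) = Vert (\<tau> v)"
  by (simp add: conj_pt_def)

lemma conj_Inner:
  "\<iota> (Inner e t) = (if fl e then Inner (\<sigma> e) (real_of_ereal (len e) - t) else Inner (\<sigma> e) t)"
  by (simp add: conj_pt_def)

lemma conj_in_gpts:
  assumes "p \<in> gpts len"
  shows "\<iota> p \<in> gpts len"
proof (cases p)
  case (Inner e t)
  with assms have "0 < t" "ereal t < len e"
    by (auto simp: gpts_def)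
  moreover have "fl e \<Longrightarrow> ereal t < len e \<Longrightarrow> 0 < t \<Longrightarrow>
      0 < real_of_ereal (len e) - t \<and> ereal (real_of_ereal (len e) - t) < len e"
    by (cases rule: flipped_len[of e]) auto
  ultimately show ?thesis
    using Inner by (auto simp: conj_pt_def gpts_def)
qed (simp add: conj_pt_def gpts_def)

lemma conj_edge_pt_unflipped:
  "\<not> fl e \<Longrightarrow> \<iota> (edge_pt src tgt len e t) = edge_pt src tgt len (\<sigma> e) t"
  by (auto simp: edge_pt_def conj_pt_def src_sigma tgt_sigma)

lemma conj_edge_pt_flipped:
  assumes "fl e"
  shows "\<iota> (edge_pt src tgt len e (ereal t)) =
    edge_pt src tgt len (\<sigma> e) (ereal (real_of_ereal (len e) - t))"
proof -
  obtain L where L: "len e = ereal L" "0 < L"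
    using flipped_len[OF assms] .
  consider "t \<le> 0" | "0 < t" "L \<le> t" | "0 < t" "t < L" by linarith
  then show ?thesis
    by cases (use L assms in \<open>auto simp: edge_pt_def conj_pt_def src_sigma tgt_sigma\<close>)
qed

lemma efun_conj_unflipped:
  "\<not> fl e \<Longrightarrow> efun src tgt len (\<lambda>p. h (\<iota> p)) e = efun src tgt len h (\<sigma> e)"
  by (simp add: efun_def fun_eq_iff conj_edge_pt_unflipped)

lemma efun_conj_flipped:
  "fl e \<Longrightarrow> efun src tgt len (\<lambda>p. h (\<iota> p)) e =
    (\<lambda>s. efun src tgt len h (\<sigma> e) (real_of_ereal (len e) - s))"
  by (simp add: efun_def fun_eq_iff conj_edge_pt_flipped)

lemma edgewise_int_affine_conj:
  assumes "edgewise_int_affine src tgt len h"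
  shows "edgewise_int_affine src tgt len (\<lambda>p. h (\<iota> p))"
  unfolding edgewise_int_affine_def
proof
  fix e
  show "locally_int_affine (efun src tgt len (\<lambda>p. h (\<iota> p)) e)"
    using assms locally_int_affine_reflect unfolding edgewise_int_affine_def
    by (cases "fl e") (simp_all add: efun_conj_flipped efun_conj_unflipped)
qed

lemma settles_on_legs_conj:
  assumes "settles_on_legs src tgt len h"
  shows "settles_on_legs src tgt len (\<lambda>p. h (\<iota> p))"
  unfolding settles_on_legs_def
proof (intro allI impI)
  fix e assume leg: "len e = \<infinity>"
  then have "\<not> fl e"
    using flipped_finite by blast
  moreover obtain a where "\<forall>s\<ge>a. efun src tgt len h (\<sigma> e) s = h (Vert (tgt (\<sigma> e)))"
    using assms leg unfolding settles_on_legs_def by (metis len_sigma)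
  ultimately show "\<exists>a. \<forall>s\<ge>a. efun src tgt len (\<lambda>p. h (\<iota> p)) e s = h (\<iota> (Vert (tgt e)))"
    by (auto simp: efun_conj_unflipped tgt_sigma)
qed

lemma slopes_conj:
  assumes "edgewise_int_affine src tgt len h"
  shows "src_slope (\<lambda>p. h (\<iota> p)) e = (if fl e then tgt_slope h (\<sigma> e) else src_slope h (\<sigma> e))"
    and "tgt_slope (\<lambda>p. h (\<iota> p)) e = (if fl e then src_slope h (\<sigma> e) else tgt_slope h (\<sigma> e))"
proof -
  have g: "locally_int_affine (efun src tgt len h (\<sigma> e))"
    using assms unfolding edgewise_int_affine_def by blast
  show "src_slope (\<lambda>p. h (\<iota> p)) e = (if fl e then tgt_slope h (\<sigma> e) else src_slope h (\<sigma> e))"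
    using flipped_finite[of e]
    by (simp add: src_slope_def tgt_slope_def efun_conj_flipped efun_conj_unflipped rslope_reflect[OF g])
  show "tgt_slope (\<lambda>p. h (\<iota> p)) e = (if fl e then src_slope h (\<sigma> e) else tgt_slope h (\<sigma> e))"
    using flipped_finite[of e]
    by (simp add: src_slope_def tgt_slope_def efun_conj_flipped efun_conj_unflipped lslope_reflect[OF g])
qed

lemma lap_conj:
  assumes h: "edgewise_int_affine src tgt len h"
  shows "lap src tgt len (\<lambda>q. h (\<iota> q)) p = lap src tgt len h (\<iota> p)"
proof (cases p)
  case (Inner e t)
  have g: "locally_int_affine (efun src tgt len h (\<sigma> e))"
    using h unfolding edgewise_int_affine_def by blast
  show ?thesis
    using Inner by (cases "fl e") (simp_all add: lap_Inner conj_Inner efun_conj_flipped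
        efun_conj_unflipped rslope_reflect[OF g] lslope_reflect[OF g])
next
  case (Vert v)
  have "lap src tgt len (\<lambda>q. h (\<iota> q)) (Vert v) = (\<Sum>e\<in>UNIV. out_slope (\<lambda>q. h (\<iota> q)) v e)"
    by (rule lap_Vert)
  also have "\<dots> = (\<Sum>e\<in>UNIV. out_slope (\<lambda>q. h (\<iota> q)) v (\<sigma> e))"
    by (rule sum.reindex_bij_witness[where i = \<sigma> and j = \<sigma>]) auto
  also have "\<dots> = (\<Sum>e\<in>UNIV. out_slope h (\<tau> v) e)"
    by (intro sum.cong refl, cases "fl e")
      (auto simp: out_slope_def slopes_conj[OF h] src_sigma tgt_sigma tau_eq_iff add.commute)
  also have "\<dots> = lap src tgt len h (\<iota> (Vert v))"
    by (simp add: lap_Vert)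
  finally show ?thesis
    using Vert by simp
qed

lemma lap_conj_eq_if_real_divisors:
  assumes "real_divisor len \<tau> \<sigma> fl D1" "real_divisor len \<tau> \<sigma> fl D2"
    and f_lap: "\<forall>p\<in>gpts len. real_of_int (D2 p - D1 p) = lap src tgt len f p"
  shows "\<forall>p\<in>gpts len. lap src tgt len f (\<iota> p) = lap src tgt len f p"
  using assms conj_in_gpts unfolding real_divisor_def by (metis (no_types, lifting))

lemma rational_fn_conj_invariant:
  assumes conn: "connected_space (gtop src tgt len)" and rf: "rational_fn src tgt len f"
    and lap_real: "\<forall>p\<in>gpts len. lap src tgt len f (\<iota> p) = lap src tgt len f p"
  shows "\<forall>p\<in>gpts len. f (\<iota> p) = f p"
proof -
  define h where "h p = f (\<iota> p) - f p" for p
  have f: "edgewise_int_affine src tgt len f" "settles_on_legs src tgt len f"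
    using rf by (rule rational_fn_edgewise_int_affine, rule rational_fn_settles_on_legs)
  then have h: "edgewise_int_affine src tgt len h" "settles_on_legs src tgt len h"
    unfolding h_def by (auto intro!: edgewise_int_affine_diff settles_on_legs_diff
        edgewise_int_affine_conj settles_on_legs_conj)
  have "lap src tgt len h p = 0" if "p \<in> gpts len" for p
    using lap_diff[OF edgewise_int_affine_conj[OF f(1)] f(1)] lap_conj[OF f(1)] lap_real that
    unfolding h_def by simp
  then obtain c where c: "\<forall>p\<in>gpts len. h p = c"
    using harmonic_imp_const[OF conn h] by blast
  have "Vert v \<in> gpts len" for v :: 'v
    by (simp add: gpts_def)
  with c have "h (Vert (\<tau> v)) = c" "h (Vert v) = c" for v
    by blast+
  moreover have "h (Vert (\<tau> v)) = - h (Vert v)" for v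
    unfolding h_def by simp
  ultimately have "c = 0"
    by (metis neg_equal_zero)
  with c show ?thesis
    unfolding h_def by simp
qed

section \<open>The degree on a real component\<close>

definition closed_edge :: "'e \<Rightarrow> ('v, 'e) gpt set" where
  "closed_edge e = edge_pt src tgt len e ` {0..len e}"

lemma Vert_src_in_closed_edge: "Vert (src e) \<in> closed_edge e"
  using len_pos[of e] unfolding closed_edge_def
  by (intro image_eqI[of _ _ 0]) (auto simp: edge_pt_def)

lemma Vert_tgt_in_closed_edge: "Vert (tgt e) \<in> closed_edge e"
  using len_pos[of e] unfolding closed_edge_def
  by (intro image_eqI[of _ _ "len e"]) (auto simp: edge_pt_def)

lemma Inner_in_closed_edge: "0 < t \<Longrightarrow> ereal t < len e \<Longrightarrow> Inner e t \<in> closed_edge e"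
  unfolding closed_edge_def by (intro image_eqI[of _ _ "ereal t"]) (auto simp: edge_pt_def)

lemma closed_edge_subset_real_pts: "\<sigma> e = e \<Longrightarrow> \<not> fl e \<Longrightarrow> closed_edge e \<subseteq> real_pts len \<tau> \<sigma> fl"
  unfolding closed_edge_def real_pts_def using conj_edge_pt_unflipped edge_pt_in_gpts by auto

lemma real_pts_Vert: "Vert v \<in> real_pts len \<tau> \<sigma> fl \<Longrightarrow> \<tau> v = v"
  by (simp add: real_pts_def)

lemma real_pts_Inner:
  "Inner e t \<in> real_pts len \<tau> \<sigma> fl \<Longrightarrow> \<sigma> e = e \<and> (fl e \<longrightarrow> real_of_ereal (len e) - t = t)"
  by (auto simp: real_pts_def conj_Inner split: if_splits)

definition component_real_edges :: "('v, 'e) gpt set \<Rightarrow> 'e set" where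
  "component_real_edges C = {e. \<sigma> e = e \<and> \<not> fl e \<and> closed_edge e \<subseteq> C}"

context
  fixes \<Gamma>' :: "('v, 'e) gpt set"
  assumes component: "\<Gamma>' \<in> connected_components_of (subtopology (gtop src tgt len) (real_pts len \<tau> \<sigma> fl))"
begin

lemma component_subset_real_pts: "\<Gamma>' \<subseteq> real_pts len \<tau> \<sigma> fl"
  using connected_components_of_subset[OF component] by simp

lemma closed_edge_subset_component:
  assumes "\<sigma> e = e" "\<not> fl e" and "p \<in> closed_edge e" "p \<in> \<Gamma>'"
  shows "closed_edge e \<subseteq> \<Gamma>'"
proof -
  have "connectedin (gtop src tgt len) (closed_edge e)"
    unfolding closed_edge_def
    by (rule connectedin_continuous_map_image[OF continuous_map_edge_pt]) simp
  then have "connectedin (subtopology (gtop src tgt len) (real_pts len \<tau> \<sigma> fl)) (closed_edge e)"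
    using closed_edge_subset_real_pts[OF assms(1,2)] by (simp add: connectedin_subtopology)
  with assms(3,4) show ?thesis
    using connected_components_of_maximal[OF component] unfolding disjnt_def by blast
qed

lemma component_subset_gpts: "\<Gamma>' \<subseteq> gpts len"
  using component_subset_real_pts by (auto simp: real_pts_def)

lemma real_edge_ends_in_component_iff:
  assumes "\<sigma> e = e" "\<not> fl e"
  shows "Vert (src e) \<in> \<Gamma>' \<longleftrightarrow> e \<in> component_real_edges \<Gamma>'"
    and "Vert (tgt e) \<in> \<Gamma>' \<longleftrightarrow> e \<in> component_real_edges \<Gamma>'"
  using closed_edge_subset_component[OF assms] Vert_src_in_closed_edge Vert_tgt_in_closed_edge
    assms unfolding component_real_edges_def by blast+

end

context
  fixes f :: "('v, 'e) gpt \<Rightarrow> real"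
  assumes f_affine: "edgewise_int_affine src tgt len f"
    and f_real: "\<forall>p\<in>gpts len. f (\<iota> p) = f p"
begin

lemma efun_conj_real: "efun src tgt len (\<lambda>p. f (\<iota> p)) e = efun src tgt len f e"
  unfolding efun_def fun_eq_iff by (simp add: f_real edge_pt_in_gpts)

lemma src_slope_real: "src_slope f e = (if fl e then tgt_slope f (\<sigma> e) else src_slope f (\<sigma> e))"
proof -
  have "src_slope (\<lambda>p. f (\<iota> p)) e = src_slope f e"
    by (simp add: src_slope_def efun_conj_real)
  with slopes_conj(1)[OF f_affine, of e] show ?thesis by simp
qed

lemma tgt_slope_real: "tgt_slope f e = (if fl e then src_slope f (\<sigma> e) else tgt_slope f (\<sigma> e))"
proof -
  have "tgt_slope (\<lambda>p. f (\<iota> p)) e = tgt_slope f e"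
    by (simp add: tgt_slope_def efun_conj_real)
  with slopes_conj(2)[OF f_affine, of e] show ?thesis by simp
qed

lemma out_slope_sigma:
  assumes "\<tau> v = v"
  shows "out_slope f v (\<sigma> e) = out_slope f v e"
  using src_slope_real[of "\<sigma> e"] tgt_slope_real[of "\<sigma> e"] assms
  by (cases "fl e") (auto simp: out_slope_def src_sigma tgt_sigma tau_eq_iff)

text \<open>Along a flipped edge mapped to itself the two ends are exchanged, so both ends lie
  at v or neither does, and they carry the same slope.\<close>
lemma even_real_out_slope_flipped:
  assumes "\<sigma> e = e" "fl e" "\<tau> v = v"
  shows "even_real (out_slope f v e)"
proof -
  have "src e = v \<longleftrightarrow> tgt e = v"
    using src_sigma[of e] assms by (auto simp: tau_eq_iff)
  moreover have "tgt_slope f e = src_slope f e"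
    using src_slope_real[of e] assms by simp
  moreover have "src_slope f e \<in> \<int>"
    using f_affine rslope_in_Ints unfolding edgewise_int_affine_def src_slope_def by blast
  ultimately show ?thesis
    using even_real_double[of "src_slope f e"] by (auto simp: out_slope_def)
qed

lemma even_real_lap_Vert_minus_real_edges:
  assumes "\<tau> v = v"
  shows "even_real (lap src tgt len f (Vert v) - (\<Sum>e\<in>{e. \<sigma> e = e \<and> \<not> fl e}. out_slope f v e))"
proof -
  have fixed: "{e\<in>UNIV. \<sigma> e = e} = {e. \<sigma> e = e \<and> \<not> fl e} \<union> {e. \<sigma> e = e \<and> fl e}"
    by auto
  have "even_real ((\<Sum>e\<in>UNIV. out_slope f v e) - (\<Sum>e\<in>{e\<in>UNIV. \<sigma> e = e}. out_slope f v e))"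
    using out_slope_sigma[OF assms] out_slope_in_Ints[OF f_affine]
    by (intro even_real_sum_minus_fixed_points) auto
  moreover have "even_real (\<Sum>e\<in>{e. \<sigma> e = e \<and> fl e}. out_slope f v e)"
    using even_real_out_slope_flipped assms by (intro even_real_sum) auto
  ultimately show ?thesis
    unfolding lap_Vert fixed by (subst (asm) sum.union_disjoint) (auto dest: even_real_add)
qed

lemma even_real_lap_midpoint:
  assumes "\<sigma> e = e" "fl e" and mid: "real_of_ereal (len e) - t = t"
  shows "even_real (lap src tgt len f (Inner e t))"
proof -
  let ?g = "efun src tgt len f e"
  have g: "locally_int_affine ?g"
    using f_affine unfolding edgewise_int_affine_def by blast
  have "?g = (\<lambda>s. ?g (real_of_ereal (len e) - s))"
    using efun_conj_flipped[OF assms(2), of f] assms(1) by (simp add: efun_conj_real)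
  then have "lslope ?g t = - rslope ?g t"
    using lslope_reflect[OF g, of "real_of_ereal (len e)" t] mid by simp
  then have "lap src tgt len f (Inner e t) = 2 * rslope ?g t"
    by (simp add: lap_Inner)
  then show ?thesis
    using even_real_double[OF rslope_in_Ints[OF g]] by simp
qed

end

context
  fixes \<Gamma>' :: "('v, 'e) gpt set" and f :: "('v, 'e) gpt \<Rightarrow> real"
  assumes component: "\<Gamma>' \<in> connected_components_of (subtopology (gtop src tgt len) (real_pts len \<tau> \<sigma> fl))"
    and f_affine: "edgewise_int_affine src tgt len f"
    and f_settles: "settles_on_legs src tgt len f"
    and f_real: "\<forall>p\<in>gpts len. f (\<iota> p) = f p"
begin

lemma even_real_sum_lap_component_vertices:
  "even_real ((\<Sum>v\<in>{v. Vert v \<in> \<Gamma>'}. lap src tgt len f (Vert v)) -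
     (\<Sum>e\<in>component_real_edges \<Gamma>'. src_slope f e + tgt_slope f e))"
proof -
  let ?V = "{v. Vert v \<in> \<Gamma>'}" and ?RE = "{e. \<sigma> e = e \<and> \<not> fl e}"
  have "\<tau> v = v" if "v \<in> ?V" for v
    using that component_subset_real_pts[OF component] real_pts_Vert by blast
  then have "even_real (\<Sum>v\<in>?V. lap src tgt len f (Vert v) - (\<Sum>e\<in>?RE. out_slope f v e))"
    by (intro even_real_sum even_real_lap_Vert_minus_real_edges[OF f_affine f_real]) simp
  moreover have "(\<Sum>v\<in>?V. out_slope f v e) =
      (if e \<in> component_real_edges \<Gamma>' then src_slope f e + tgt_slope f e else 0)" if "e \<in> ?RE" for e
    using real_edge_ends_in_component_iff[OF component, of e] that
    by (simp add: out_slope_def sum.distrib sum.delta')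
  then have "(\<Sum>v\<in>?V. \<Sum>e\<in>?RE. out_slope f v e) =
      (\<Sum>e\<in>component_real_edges \<Gamma>'. src_slope f e + tgt_slope f e)"
    by (subst sum.swap) (simp add: sum.If_cases component_real_edges_def Int_def conj_ac)
  ultimately show ?thesis
    by (simp add: sum_subtractf)
qed

lemma sum_lap_component_real_edges:
  assumes "finite U" "U \<subseteq> \<Gamma>'" and zero: "\<And>p. p \<in> \<Gamma>' \<Longrightarrow> p \<notin> U \<Longrightarrow> lap src tgt len f p = 0"
  shows "(\<Sum>p\<in>{p\<in>U. \<exists>e t. p = Inner e t \<and> \<sigma> e = e \<and> \<not> fl e}. lap src tgt len f p) =
    - (\<Sum>e\<in>component_real_edges \<Gamma>'. src_slope f e + tgt_slope f e)"
proof -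
  define Z where "Z e = {t. Inner e t \<in> U}" for e
  have Z_finite: "finite (Z e)" for e
    unfolding Z_def using \<open>finite U\<close> by (rule finite_vimageI[of _ "Inner e", unfolded vimage_def]) (simp add: inj_def)
  have inner: "0 < t \<and> ereal t < len e" if "Inner e t \<in> \<Gamma>'" for e t
    using that component_subset_gpts[OF component] by (auto simp: gpts_def)
  have "{p\<in>U. \<exists>e t. p = Inner e t \<and> \<sigma> e = e \<and> \<not> fl e} =
      (\<lambda>(e, t). Inner e t) ` (SIGMA e:component_real_edges \<Gamma>'. Z e)"
  proof safe
    fix e t assume "Inner e t \<in> U" "\<sigma> e = e" "\<not> fl e"
    moreover from this have "Inner e t \<in> closed_edge e"
      using inner assms(2) by (blast intro: Inner_in_closed_edge)
    ultimately have "e \<in> component_real_edges \<Gamma>'"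
      using closed_edge_subset_component[OF component] assms(2)
      unfolding component_real_edges_def by blast
    with \<open>Inner e t \<in> U\<close> show "Inner e t \<in> (\<lambda>(e, t). Inner e t) ` (SIGMA e:component_real_edges \<Gamma>'. Z e)"
      unfolding Z_def by force
  qed (auto simp: Z_def component_real_edges_def)
  then have "(\<Sum>p\<in>{p\<in>U. \<exists>e t. p = Inner e t \<and> \<sigma> e = e \<and> \<not> fl e}. lap src tgt len f p) =
      (\<Sum>e\<in>component_real_edges \<Gamma>'. \<Sum>t\<in>Z e. lap src tgt len f (Inner e t))"
    by (simp add: sum.reindex inj_on_def sum.Sigma Z_finite case_prod_beta)
  also have "\<dots> = (\<Sum>e\<in>component_real_edges \<Gamma>'. - (src_slope f e + tgt_slope f e))"
  proof (intro sum.cong refl sum_lap_edge_interior[OF f_affine f_settles Z_finite])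
    fix e assume e: "e \<in> component_real_edges \<Gamma>'"
    show "Z e \<subseteq> {t. 0 < t \<and> ereal t < len e}"
      using inner assms(2) unfolding Z_def by blast
    fix t assume "0 < t" "ereal t < len e" "t \<notin> Z e"
    then show "lap src tgt len f (Inner e t) = 0"
      using e Inner_in_closed_edge zero unfolding Z_def component_real_edges_def by blast
  qed
  finally show ?thesis
    by (simp only: sum_negf)
qed

lemma even_real_sum_lap_component_midpoints:
  assumes "U \<subseteq> \<Gamma>'"
  shows "even_real (\<Sum>p\<in>{p\<in>U. \<exists>e t. p = Inner e t \<and> fl e}. lap src tgt len f p)"
proof (rule even_real_sum)
  fix p assume "p \<in> {p\<in>U. \<exists>e t. p = Inner e t \<and> fl e}"
  then obtain e t where "p = Inner e t" "fl e" "Inner e t \<in> real_pts len \<tau> \<sigma> fl"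
    using assms component_subset_real_pts[OF component] by blast
  then show "even_real (lap src tgt len f p)"
    using real_pts_Inner even_real_lap_midpoint[OF f_affine f_real] by blast
qed

lemma even_real_sum_lap_component:
  assumes "finite U" "U \<subseteq> \<Gamma>'" and zero: "\<And>p. p \<in> \<Gamma>' \<Longrightarrow> p \<notin> U \<Longrightarrow> lap src tgt len f p = 0"
  shows "even_real (\<Sum>p\<in>U. lap src tgt len f p)"
proof -
  define UV where "UV = {p\<in>U. \<exists>v. p = Vert v}"
  define UR where "UR = {p\<in>U. \<exists>e t. p = Inner e t \<and> \<sigma> e = e \<and> \<not> fl e}"
  define UM where "UM = {p\<in>U. \<exists>e t. p = Inner e t \<and> fl e}"
  have "\<sigma> e = e" if "Inner e t \<in> U" for e t
    using that assms(2) component_subset_real_pts[OF component] real_pts_Inner by blast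
  then have "U = UV \<union> UR \<union> UM"
    unfolding UV_def UR_def UM_def by (auto intro: gpt.exhaust)
  moreover have "finite UV" "finite UR" "finite UM" "UV \<inter> UR = {}" "(UV \<union> UR) \<inter> UM = {}"
    using \<open>finite U\<close> by (auto simp: UV_def UR_def UM_def)
  ultimately have "(\<Sum>p\<in>U. lap src tgt len f p) =
      (\<Sum>p\<in>UV. lap src tgt len f p) + (\<Sum>p\<in>UR. lap src tgt len f p) + (\<Sum>p\<in>UM. lap src tgt len f p)"
    by (simp add: sum.union_disjoint)
  moreover have "(\<Sum>p\<in>UV. lap src tgt len f p) = (\<Sum>p\<in>Vert ` {v. Vert v \<in> \<Gamma>'}. lap src tgt len f p)"
    using assms(2) zero by (intro sum.mono_neutral_left) (auto simp: UV_def)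
  moreover have "(\<Sum>p\<in>Vert ` {v. Vert v \<in> \<Gamma>'}. lap src tgt len f p) =
      (\<Sum>v\<in>{v. Vert v \<in> \<Gamma>'}. lap src tgt len f (Vert v))"
    by (simp add: sum.reindex inj_on_def)
  ultimately have "(\<Sum>p\<in>U. lap src tgt len f p) =
      ((\<Sum>v\<in>{v. Vert v \<in> \<Gamma>'}. lap src tgt len f (Vert v)) -
        (\<Sum>e\<in>component_real_edges \<Gamma>'. src_slope f e + tgt_slope f e)) +
      (\<Sum>p\<in>UM. lap src tgt len f p)"
    using sum_lap_component_real_edges[OF assms] unfolding UR_def by simp
  then show ?thesis
    using even_real_add[OF even_real_sum_lap_component_vertices
        even_real_sum_lap_component_midpoints[OF assms(2)]]
    unfolding UM_def by simp
qed

end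

end

theorem theorem4:
  fixes src tgt :: "'e::finite \<Rightarrow> 'v::finite" and len :: "'e \<Rightarrow> ereal"
    and \<tau> :: "'v \<Rightarrow> 'v" and \<sigma> :: "'e \<Rightarrow> 'e" and fl :: "'e \<Rightarrow> bool"
    and D1 D2 :: "('v, 'e) gpt \<Rightarrow> int" and \<Gamma>' :: "('v, 'e) gpt set"
  assumes "metric_graph_model src tgt len"
    and "real_structure src tgt len \<tau> \<sigma> fl"
    and "divisor len D1" and "divisor len D2"
    and "real_divisor len \<tau> \<sigma> fl D1" and "real_divisor len \<tau> \<sigma> fl D2"
    and "lin_equiv src tgt len D1 D2"
    and "\<Gamma>' \<in> connected_components_of (subtopology (gtop src tgt len) (real_pts len \<tau> \<sigma> fl))"
  shows "deg_on D1 \<Gamma>' mod 2 = deg_on D2 \<Gamma>' mod 2"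
proof -
  interpret real_metric_graph src tgt len \<tau> \<sigma> fl
    using assms(1,2) by unfold_locales (auto simp: metric_graph_model_def)
  obtain f where rf: "rational_fn src tgt len f"
    and f_lap: "\<forall>p\<in>gpts len. real_of_int (D2 p - D1 p) = lap src tgt len f p"
    using assms(7) unfolding lin_equiv_def by blast
  have "connected_space (gtop src tgt len)"
    using assms(1) unfolding metric_graph_model_def by blast
  then have f_real: "\<forall>p\<in>gpts len. f (\<iota> p) = f p"
    using lap_conj_eq_if_real_divisors[OF assms(5,6) f_lap] by (rule rational_fn_conj_invariant[OF _ rf])
  note support = sum_lap_support_eq_deg_on_diff[OF assms(3,4) f_lap component_subset_gpts[OF assms(8)]]
  have "even_real (of_int (deg_on D2 \<Gamma>' - deg_on D1 \<Gamma>'))"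
    using even_real_sum_lap_component[OF assms(8) rational_fn_edgewise_int_affine[OF rf]
        rational_fn_settles_on_legs[OF rf] f_real support(1-3)] support(4) by simp
  then have "even (deg_on D2 \<Gamma>' - deg_on D1 \<Gamma>')"
    by (simp only: even_real_of_int)
  then show ?thesis
    by presburger
qed

end
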